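(* Let $M\in\mathbb Z$, $s\in\{0,\dots,NL-1\}$ with $M\equiv s\pmod{NL}$, $l\ge0$ and $n=s+lNL$. For every $d\ge0$, the subspace $V^d_{M,n}\subset\wedge^nV_{\mathrm{aff}}$ is invariant under the vertical action $\pi^v_{(n)}$ of $U'_q(\widehat{\mathfrak{sl}}_N)$ (for any parameters $p\in q^{\mathbb Z}$, $\nu(1),\dots,\nu(L)\in\mathbb Z$).
   Context: Let $N\ge2$, $L\ge 1$ be integers, $q$ an indeterminate and $\mathbb K=\mathbb Q(q^{1/(2N)})$. Let $\mathbb K^L$ have basis $\mathfrak e_1,\dots,\mathfrak e_L$, $\mathbb K^N$ have basis $\mathfrak v_1,\dots,\mathfrak v_N$, and $V_{\mathrm{aff}}=\mathbb K[z^{\pm1}]\otimes\mathbb K^L\otimes\mathbb K^N$. Identify $V_{\mathrm{aff}}^{\otimes n}=\mathbb K[z_1^{\pm1},\dots,z_n^{\pm1}]\otimes(\mathbb K^L)^{\otimes n}\otimes(\mathbb K^N)^{\otimes n}$. With $E_{a,b}$ the matrix units of $\mathbb K^L$ put $R(z_1,z_2)=(q^2z_1-z_2)\sum_{a}E_{a,a}\otimes E_{a,a}+q(z_1-z_2)\sum_{a\neq b}E_{a,a}\otimes E_{b,b}+z_1(q^2-1)\sum_{a<b}E_{a,b}\otimes E_{b,a}+z_2(q^2-1)\sum_{a>b}E_{a,b}\otimes E_{b,a}$, $s$ the exchange of the two factors of $(\mathbb K[z^{\pm1}]\otimes\mathbb K^L)^{\otimes 2}$, $\overset{c}{T}=\frac{z_1-q^2z_2}{z_1-z_2}\bigl(1-s\cdot\frac{R(z_1,z_2)}{q^2z_1-z_2}\bigr)-1$,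 and $\overset{s}{T}$ on $(\mathbb K^N)^{\otimes 2}$: $\mathfrak v_{\epsilon_1}\otimes\mathfrak v_{\epsilon_2}\mapsto q^2\mathfrak v_{\epsilon_1}\otimes\mathfrak v_{\epsilon_2}$ if $\epsilon_1=\epsilon_2$, $q\,\mathfrak v_{\epsilon_2}\otimes\mathfrak v_{\epsilon_1}$ if $\epsilon_1<\epsilon_2$, $q\,\mathfrak v_{\epsilon_2}\otimes\mathfrak v_{\epsilon_1}+(q^2-1)\mathfrak v_{\epsilon_1}\otimes\mathfrak v_{\epsilon_2}$ if $\epsilon_1>\epsilon_2$; $\overset{c}{T}_i,\overset{s}{T}_i$ act in factors $i,i+1$. $\wedge^nV_{\mathrm{aff}}=V_{\mathrm{aff}}^{\otimes n}/\sum_{i}\mathrm{Im}(\overset{c}{T}_i-\overset{s}{T}_i)$ with quotient map $\wedge$. Write $k=\bar k-N(\dot k+L\underline k)$ ($\bar k\in\{1..N\}$, $\dot k\in\{1..L\}$, $\underline k\in\mathbb Z$), $u_k=z^{\underline k}\mathfrak e_{\dot k}\mathfrak v_{\bar k}$; $u_{k_1}\wedge\cdots\wedge u_{k_n}$ is the image of $u_{k_1}\otimes\cdots\otimes u_{k_n}$, normally ordered if $k_1>\cdots>k_n$ (these form a basis of $\wedge^nV_{\mathrm{aff}}$). Gradings: let $o_i=M-i+1$. For $r\ge0$, $V_{M,r}\subset\wedge^rV_{\mathrm{aff}}$ is the span of the normally ordered $u_{k_1}\wedge\cdots\wedge u_{k_r}$ with $\underline{k_r}\le\underline{o_r}$ ($V_{M,0}=\mathbb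 K$), graded by $\deg=\sum_{i=1}^r(\underline{o_i}-\underline{k_i})$; $V^d_{M,r}$ is its degree-$d$ component. Cherednik operators: fix $p\in q^{\mathbb Z}$ and integers $\nu(1),\dots,\nu(L)$. On $\mathbb K[z^{\pm1}]\otimes\mathbb K^L$ let $q^{\nu^\vee}(z^m\mathfrak e_a)=q^{\nu(L+1-a)}z^m\mathfrak e_a$, $p^D(z^m\mathfrak e_a)=p^mz^m\mathfrak e_a$; $(X)_i$ denotes $X$ in the $i$th factor. Let $s_i$ exchange factors $i,i+1$, $\tilde T_{i,i+1}=-q(\overset{c}{T}_i)^{-1}$, and $Y_i^{(n)}=\tilde T_{i,i+1}^{-1}\cdots\tilde T_{n-1,n}^{-1}s_{n-1}\cdots s_1(p^D)_1(q^{\nu^\vee})_1\tilde T_{1,2}\cdots\tilde T_{i-1,i}$ on $(\mathbb K[z^{\pm1}]\otimes\mathbb K^L)^{\otimes n}$. For $r\ge0$ write $r=s'+NLm'$, $0\le s'<NL$, $\underline{\underline r}=Nm'$. Vertical action: with $e_{i,j}$ the matrix units of $\mathbb K^N$ (indices mod $N$), $k_i=q^{e_{i,i}-e_{i+1,i+1}}$ and $(X)_j$ denoting $X$ in the $j$th factor of $(\mathbb K^N)^{\otimes n}$, for $f\in(\mathbb K[z^{\pm1}]\otimes\mathbb K^L)^{\otimes n}$, $v\in(\mathbb K^N)^{\otimes n}$ and Chevalley generators $E_i,F_i,K_i$ ($0\le i<N$) of $U'_q(\widehat{\mathfrak{sl}}_N)$: $\pi^v_{(n)}(E_i)\wedge(f\otimes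 v)=\wedge\sum_{j=1}^n(q^{-\underline{\underline n}}Y_j^{(n)})^{-\delta_{i,0}}f\otimes(e_{i,i+1})_j(k_i)_{j+1}\cdots(k_i)_nv$, $\pi^v_{(n)}(F_i)\wedge(f\otimes v)=\wedge\sum_{j=1}^n(q^{-\underline{\underline n}}Y_j^{(n)})^{\delta_{i,0}}f\otimes(e_{i+1,i})_j(k_i^{-1})_1\cdots(k_i^{-1})_{j-1}v$, $\pi^v_{(n)}(K_i)\wedge(f\otimes v)=\wedge f\otimes(k_i)_1\cdots(k_i)_nv$; this is a well-defined $U'_q(\widehat{\mathfrak{sl}}_N)$-action on $\wedge^nV_{\mathrm{aff}}$ (Varagnolo–Vasserot duality). *)

theory Defs
  imports "HOL-Computational_Algebra.Fraction_Field" "HOL-Computational_Algebra.Polynomial"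
          "HOL-Library.Function_Algebras"
begin

text \<open>K = Q(t) with t = q^(1/(2N)), realised as the fraction field of Q[t]; q = t^(2N).\<close>
type_synonym kf = "rat poly fract"

text \<open>A basis label of V_aff^{tensor n} = K[z_1^pm..z_n^pm] (x) (K^L)^{tensor n} (x) (K^N)^{tensor n}:
  (exponents of z_1..z_n, indices of e's in 1..L, indices of v's in 1..N).\<close>
type_synonym lbl = "int list \<times> nat list \<times> nat list"
type_synonym vec = "lbl \<Rightarrow> kf"

definition qpar :: "nat \<Rightarrow> kf" where
  "qpar N = (Fraction_Field.Fract [:0, 1:] 1) ^ (2 * N)"

definition wf_lbl :: "nat \<Rightarrow> nat \<Rightarrow> nat \<Rightarrow> lbl \<Rightarrow> bool" where
  "wf_lbl N L n x = (case x of (ex, es, vs) \<Rightarrow>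
      length ex = n \<and> length es = n \<and> length vs = n \<and>
      (\<forall>a\<in>set es. 1 \<le> a \<and> a \<le> L) \<and> (\<forall>b\<in>set vs. 1 \<le> b \<and> b \<le> N))"

definition Vn :: "nat \<Rightarrow> nat \<Rightarrow> nat \<Rightarrow> vec set" where
  "Vn N L n = {f. finite {x. f x \<noteq> 0} \<and> (\<forall>x. f x \<noteq> 0 \<longrightarrow> wf_lbl N L n x)}"

definition bv :: "lbl \<Rightarrow> vec" where
  "bv x = (\<lambda>y. if y = x then 1 else 0)"

definition sc :: "kf \<Rightarrow> vec \<Rightarrow> vec" where
  "sc c f = (\<lambda>y. c * f y)"

definition lin :: "(lbl \<Rightarrow> vec) \<Rightarrow> vec \<Rightarrow> vec" where
  "lin F f = (\<lambda>y. \<Sum>x\<in>{x. f x \<noteq> 0}. f x * F x y)"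

definition lspan :: "vec set \<Rightarrow> vec set" where
  "lspan S = {f. \<exists>A c. finite A \<and> A \<subseteq> S \<and> f = (\<Sum>g\<in>A. sc (c g) g)}"

section \<open>Operators on the z/e part (factor indices are 1-based)\<close>

definition zmul :: "nat \<Rightarrow> vec \<Rightarrow> vec" where
  "zmul j f = (\<lambda>(ex, es, vs). f (ex[j - 1 := ex ! (j - 1) - 1], es, vs))"

definition shift :: "nat \<Rightarrow> lbl \<Rightarrow> lbl" where
  "shift j x = (case x of (ex, es, vs) \<Rightarrow> (ex[j - 1 := ex ! (j - 1) + 1], es, vs))"

definition swp :: "nat \<Rightarrow> 'a list \<Rightarrow> 'a list" where
  "swp i xs = xs[i - 1 := xs ! i, i := xs ! (i - 1)]"

definition sop :: "nat \<Rightarrow> vec \<Rightarrow> vec" where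
  "sop i f = (\<lambda>(ex, es, vs). f (swp i ex, swp i es, vs))"

definition Rop :: "nat \<Rightarrow> nat \<Rightarrow> vec \<Rightarrow> vec" where
  "Rop N i = lin (\<lambda>x. case x of (ex, es, vs) \<Rightarrow>
     (let q = qpar N; a = es ! (i - 1); b = es ! i; y = (ex, swp i es, vs) in
      if a = b then sc (q ^ 2) (bv (shift i x)) - bv (shift (Suc i) x)
      else sc q (bv (shift i x) - bv (shift (Suc i) x))
           + sc (q ^ 2 - 1) (bv (shift (if b < a then i else Suc i) y))))"

definition Tsop :: "nat \<Rightarrow> nat \<Rightarrow> vec \<Rightarrow> vec" where
  "Tsop N i = lin (\<lambda>x. case x of (ex, es, vs) \<Rightarrow>
     (let q = qpar N; e1 = vs ! (i - 1); e2 = vs ! i; y = (ex, es, swp i vs) in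
      if e1 = e2 then sc (q ^ 2) (bv x)
      else if e1 < e2 then sc q (bv y)
      else sc q (bv y) + sc (q ^ 2 - 1) (bv x)))"

text \<open>T^c_i = (z_i - q^2 z_{i+1})/(z_i - z_{i+1}) (1 - s_i R/(q^2 z_i - z_{i+1})) - 1, i.e. the unique
  element h of V_aff^{tensor n} with
  (z_i - z_{i+1})(q^2 z_{i+1} - z_i)(h + f) = (z_i - q^2 z_{i+1})((q^2 z_{i+1} - z_i) f - s_i(R f)).\<close>
definition Tcop :: "nat \<Rightarrow> nat \<Rightarrow> nat \<Rightarrow> nat \<Rightarrow> vec \<Rightarrow> vec" where
  "Tcop N L n i f =
    (let q = qpar N;
         Z1 = (\<lambda>g. zmul i g - zmul (Suc i) g);
         Z2 = (\<lambda>g. sc (q ^ 2) (zmul (Suc i) g) - zmul i g);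
         Z3 = (\<lambda>g. zmul i g - sc (q ^ 2) (zmul (Suc i) g))
     in THE h. h \<in> Vn N L n \<and> Z1 (Z2 (h + f)) = Z3 (Z2 f - sop i (Rop N i f)))"

definition Tc_inv :: "nat \<Rightarrow> nat \<Rightarrow> nat \<Rightarrow> nat \<Rightarrow> vec \<Rightarrow> vec" where
  "Tc_inv N L n i = the_inv_into (Vn N L n) (Tcop N L n i)"

definition Tt :: "nat \<Rightarrow> nat \<Rightarrow> nat \<Rightarrow> nat \<Rightarrow> vec \<Rightarrow> vec" where
  "Tt N L n i f = sc (- qpar N) (Tc_inv N L n i f)"

definition Tt_inv :: "nat \<Rightarrow> nat \<Rightarrow> nat \<Rightarrow> nat \<Rightarrow> vec \<Rightarrow> vec" where
  "Tt_inv N L n i f = sc (- inverse (qpar N)) (Tcop N L n i f)"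

text \<open>(p^D)_1 with p = q^pe, and (q^{nu^vee})_1.\<close>
definition pD1 :: "nat \<Rightarrow> int \<Rightarrow> vec \<Rightarrow> vec" where
  "pD1 N pe f = (\<lambda>(ex, es, vs). ((qpar N powi pe) powi (ex ! 0)) * f (ex, es, vs))"

definition qnu1 :: "nat \<Rightarrow> nat \<Rightarrow> (nat \<Rightarrow> int) \<Rightarrow> vec \<Rightarrow> vec" where
  "qnu1 N L \<nu> f = (\<lambda>(ex, es, vs). (qpar N powi \<nu> (L + 1 - es ! 0)) * f (ex, es, vs))"

text \<open>Cherednik operator Y_i^{(n)} (composition, rightmost factor acts first).\<close>
definition Yop :: "nat \<Rightarrow> nat \<Rightarrow> nat \<Rightarrow> int \<Rightarrow> (nat \<Rightarrow> int) \<Rightarrow> nat \<Rightarrow> vec \<Rightarrow> vec" where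
  "Yop N L n pe \<nu> i = foldr (\<circ>)
     (map (Tt_inv N L n) [i..<n] @ map sop (rev [1..<n]) @ [pD1 N pe, qnu1 N L \<nu>]
      @ map (Tt N L n) [1..<i]) id"

text \<open>double-underline r = N m' where r = s' + N L m', 0 <= s' < N L.\<close>
definition nn :: "nat \<Rightarrow> nat \<Rightarrow> nat \<Rightarrow> nat" where
  "nn N L r = N * (r div (N * L))"

definition Yq :: "nat \<Rightarrow> nat \<Rightarrow> nat \<Rightarrow> int \<Rightarrow> (nat \<Rightarrow> int) \<Rightarrow> nat \<Rightarrow> vec \<Rightarrow> vec" where
  "Yq N L n pe \<nu> j f = sc (qpar N powi (- int (nn N L n))) (Yop N L n pe \<nu> j f)"

definition Yq_inv :: "nat \<Rightarrow> nat \<Rightarrow> nat \<Rightarrow> int \<Rightarrow> (nat \<Rightarrow> int) \<Rightarrow> nat \<Rightarrow> vec \<Rightarrow> vec" where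
  "Yq_inv N L n pe \<nu> j = the_inv_into (Vn N L n) (Yq N L n pe \<nu> j)"

section \<open>Spin operators for the vertical action (indices of K^N taken mod N)\<close>

definition rep :: "nat \<Rightarrow> nat \<Rightarrow> nat" where
  "rep N i = (if i mod N = 0 then N else i mod N)"

text \<open>eigenvalue of k_i = q^{e_{ii} - e_{i+1,i+1}} on v_eps.\<close>
definition kcoef :: "nat \<Rightarrow> nat \<Rightarrow> nat \<Rightarrow> kf" where
  "kcoef N i \<epsilon> = qpar N powi ((if \<epsilon> mod N = i mod N then 1 else 0)
                               - (if \<epsilon> mod N = (i + 1) mod N then 1 else 0))"

text \<open>(e_{i,i+1})_j (k_i)_{j+1} ... (k_i)_n\<close>
definition EvOp :: "nat \<Rightarrow> nat \<Rightarrow> nat \<Rightarrow> nat \<Rightarrow> vec \<Rightarrow> vec" where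
  "EvOp N n i j = lin (\<lambda>x. case x of (ex, es, vs) \<Rightarrow>
     (if vs ! (j - 1) mod N = (i + 1) mod N
      then sc (\<Prod>m\<in>{j+1..n}. kcoef N i (vs ! (m - 1))) (bv (ex, es, vs[j - 1 := rep N i]))
      else 0))"

text \<open>(e_{i+1,i})_j (k_i^{-1})_1 ... (k_i^{-1})_{j-1}\<close>
definition FvOp :: "nat \<Rightarrow> nat \<Rightarrow> nat \<Rightarrow> nat \<Rightarrow> vec \<Rightarrow> vec" where
  "FvOp N n i j = lin (\<lambda>x. case x of (ex, es, vs) \<Rightarrow>
     (if vs ! (j - 1) mod N = i mod N
      then sc (\<Prod>m\<in>{1..<j}. inverse (kcoef N i (vs ! (m - 1))))
              (bv (ex, es, vs[j - 1 := rep N (i + 1)]))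
      else 0))"

text \<open>(k_i)_1 ... (k_i)_n\<close>
definition KvOp :: "nat \<Rightarrow> nat \<Rightarrow> nat \<Rightarrow> vec \<Rightarrow> vec" where
  "KvOp N n i = lin (\<lambda>x. case x of (ex, es, vs) \<Rightarrow>
     sc (\<Prod>m\<in>{1..n}. kcoef N i (vs ! (m - 1))) (bv x))"

definition piE :: "nat \<Rightarrow> nat \<Rightarrow> nat \<Rightarrow> int \<Rightarrow> (nat \<Rightarrow> int) \<Rightarrow> nat \<Rightarrow> vec \<Rightarrow> vec" where
  "piE N L n pe \<nu> i f =
     (\<Sum>j\<in>{1..n}. (if i = 0 then Yq_inv N L n pe \<nu> j else id) (EvOp N n i j f))"

definition piF :: "nat \<Rightarrow> nat \<Rightarrow> nat \<Rightarrow> int \<Rightarrow> (nat \<Rightarrow> int) \<Rightarrow> nat \<Rightarrow> vec \<Rightarrow> vec" where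
  "piF N L n pe \<nu> i f =
     (\<Sum>j\<in>{1..n}. (if i = 0 then Yq N L n pe \<nu> j else id) (FvOp N n i j f))"

definition piK :: "nat \<Rightarrow> nat \<Rightarrow> nat \<Rightarrow> vec \<Rightarrow> vec" where
  "piK N n i f = KvOp N n i f"

text \<open>Kernel of the quotient map: sum of the images of T^c_i - T^s_i, 1 <= i < n.\<close>
definition Wsub :: "nat \<Rightarrow> nat \<Rightarrow> nat \<Rightarrow> vec set" where
  "Wsub N L n = lspan {Tcop N L n i f - Tsop N i f | i f. 1 \<le> i \<and> i < n \<and> f \<in> Vn N L n}"

text \<open>k = bar k - N (dot k + L und k), bar k in 1..N, dot k in 1..L.\<close>
definition kbar :: "nat \<Rightarrow> int \<Rightarrow> nat" where
  "kbar N k = nat ((k - 1) mod int N + 1)"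

definition kdot :: "nat \<Rightarrow> nat \<Rightarrow> int \<Rightarrow> nat" where
  "kdot N L k = nat (((int (kbar N k) - k) div int N - 1) mod int L + 1)"

definition kund :: "nat \<Rightarrow> nat \<Rightarrow> int \<Rightarrow> int" where
  "kund N L k = ((int (kbar N k) - k) div int N - int (kdot N L k)) div int L"

text \<open>label of u_{k_1} (x) ... (x) u_{k_n}\<close>
definition ulab :: "nat \<Rightarrow> nat \<Rightarrow> int list \<Rightarrow> lbl" where
  "ulab N L ks = (map (kund N L) ks, map (kdot N L) ks, map (kbar N) ks)"

text \<open>Normally ordered labels spanning V^d_{M,n}; o_i = M - i + 1.\<close>
definition Bd :: "nat \<Rightarrow> nat \<Rightarrow> int \<Rightarrow> nat \<Rightarrow> int \<Rightarrow> lbl set" where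
  "Bd N L M n d = {ulab N L ks | ks. length ks = n \<and> sorted_wrt (>) ks \<and>
      (n > 0 \<longrightarrow> kund N L (last ks) \<le> kund N L (M - int n + 1)) \<and>
      (\<Sum>i=1..n. kund N L (M - int i + 1) - kund N L (ks ! (i - 1))) = d}"

text \<open>Representatives in V_aff^{tensor n} of V^d_{M,n}.\<close>
definition VMd :: "nat \<Rightarrow> nat \<Rightarrow> int \<Rightarrow> nat \<Rightarrow> int \<Rightarrow> vec set" where
  "VMd N L M n d = lspan (bv ` Bd N L M n d)"

text \<open>phi preserves the image of S in the quotient by W (phi given on representatives).\<close>
definition stable_mod :: "vec set \<Rightarrow> vec set \<Rightarrow> (vec \<Rightarrow> vec) \<Rightarrow> bool" where
  "stable_mod S W \<phi> = (\<forall>f\<in>S. \<exists>g\<in>S. \<phi> f - g \<in> W)"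

end

theory Submission
  imports Defs
begin

text \<open>
  Modulo the relations W, the subspace V^d_{M,n} is the span of all tensors u_k1 (x) ... (x) u_kn
  whose z-exponents are at most und(o_n) and sum to und(o_1) + ... + und(o_n) - d: such a tensor
  straightens modulo W into normally ordered ones of the same kind, by induction on a
  lexicographic measure. Every operator entering the vertical action preserves this space of
  tensors. The spin operators only act on the K^N factors, p^D and q^nu are diagonal, and T^c_i
  (hence its inverse and the Cherednik operators Y_j) sends a tensor to tensors whose exponents
  at positions i, i+1 lie between the original ones and have the same sum; this follows by
  induction on the gap of the two exponents from the affine Hecke relations for T^c_i.
\<close>

definition supp :: "vec \<Rightarrow> lbl set" where
  "supp f = {x. f x \<noteq> 0}"

lemma sum_fun_apply: "(\<Sum>x\<in>A. g x) y = (\<Sum>x\<in>A. g x y)"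
  for g :: "'a \<Rightarrow> 'b \<Rightarrow> 'c::comm_monoid_add"
  by (induction A rule: infinite_finite_induct) auto

lemma sc_apply [simp]: "sc c f y = c * f y"
  by (simp add: sc_def)

text \<open>Writing scalar multiples as products in the function ring lets \<open>algebra_simps\<close>
  normalise linear combinations of vectors.\<close>
definition const_vec :: "kf \<Rightarrow> vec" where
  "const_vec c = (\<lambda>_. c)"

lemma sc_const_vec: "sc c f = const_vec c * f"
  by (rule ext) (simp add: const_vec_def)

lemma const_vec_mult: "const_vec (a * b) = const_vec a * const_vec b"
  and const_vec_add: "const_vec (a + b) = const_vec a + const_vec b"
  and const_vec_diff: "const_vec (a - b) = const_vec a - const_vec b"
  and const_vec_minus: "const_vec (- a) = - const_vec a"
  and const_vec_one: "const_vec 1 = 1"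
  and const_vec_zero: "const_vec 0 = 0"
  by (rule ext; simp add: const_vec_def)+

lemma const_vec_power: "const_vec (a ^ k) = const_vec a ^ k"
  by (induction k) (simp_all add: const_vec_one const_vec_mult)

lemmas const_vec_simps = sc_const_vec const_vec_mult const_vec_add const_vec_diff
  const_vec_minus const_vec_one const_vec_zero const_vec_power

lemma sc_add: "sc c (f + g) = sc c f + sc c g"
  and sc_diff: "sc c (f - g) = sc c f - sc c g"
  and sc_minus: "sc c (- f) = - sc c f"
  and sc_sc: "sc a (sc b f) = sc (a * b) f"
  and sc_add_left: "sc (a + b) f = sc a f + sc b f"
  and sc_minus_one: "sc (- 1) f = - f"
  and sc_uminus_left: "sc (- a) f = - sc a f"
  by (rule ext; simp add: algebra_simps)+

lemma sc_one [simp]: "sc 1 f = f"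
  and sc_zero [simp]: "sc 0 f = 0"
  and sc_zero_right [simp]: "sc c 0 = 0"
  by (rule ext; simp)+

lemma sc_sum: "sc c (\<Sum>x\<in>A. g x) = (\<Sum>x\<in>A. sc c (g x))"
  by (rule ext) (simp add: sum_fun_apply sum_distrib_left)

lemma supp_add: "supp (f + g) \<subseteq> supp f \<union> supp g"
  and supp_diff: "supp (f - g) \<subseteq> supp f \<union> supp g"
  and supp_sc: "supp (sc c f) \<subseteq> supp f"
  and supp_uminus: "supp (- f) = supp f"
  and supp_bv: "supp (bv x) = {x}"
  by (auto simp: supp_def bv_def)

lemma Vn_iff: "f \<in> Vn N L n \<longleftrightarrow> finite (supp f) \<and> (\<forall>x\<in>supp f. wf_lbl N L n x)"
  by (auto simp: Vn_def supp_def)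

lemma Vn_zero [simp]: "0 \<in> Vn N L n"
  by (simp add: Vn_iff supp_def)

lemma Vn_add [intro]: "f \<in> Vn N L n \<Longrightarrow> g \<in> Vn N L n \<Longrightarrow> f + g \<in> Vn N L n"
  and Vn_diff [intro]: "f \<in> Vn N L n \<Longrightarrow> g \<in> Vn N L n \<Longrightarrow> f - g \<in> Vn N L n"
  unfolding Vn_iff using supp_add supp_diff by (meson UnE finite_Un finite_subset subsetD)+

lemma Vn_sc [intro]: "f \<in> Vn N L n \<Longrightarrow> sc c f \<in> Vn N L n"
  unfolding Vn_iff using supp_sc by (meson finite_subset subsetD)

lemma Vn_uminus [intro]: "f \<in> Vn N L n \<Longrightarrow> - f \<in> Vn N L n"
  unfolding Vn_iff supp_uminus by simp

lemma Vn_sum [intro]: "(\<And>x. x \<in> A \<Longrightarrow> g x \<in> Vn N L n) \<Longrightarrow> (\<Sum>x\<in>A. g x) \<in> Vn N L n"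
  by (induction A rule: infinite_finite_induct) auto

lemma Vn_bv [intro]: "wf_lbl N L n x \<Longrightarrow> bv x \<in> Vn N L n"
  by (simp add: Vn_iff supp_bv)

lemma basis_expansion: "finite (supp f) \<Longrightarrow> f = (\<Sum>x\<in>supp f. sc (f x) (bv x))"
proof (rule ext)
  fix y assume fin: "finite (supp f)"
  have "(\<Sum>x\<in>supp f. sc (f x) (bv x)) y = (\<Sum>x\<in>supp f. if x = y then f y else 0)"
    by (simp add: sum_fun_apply bv_def) (rule sum.cong, auto)
  also have "\<dots> = f y"
    using fin by (simp add: sum.delta' supp_def)
  finally show "f y = (\<Sum>x\<in>supp f. sc (f x) (bv x)) y" by simp
qed

definition linear_on_Vn :: "nat \<Rightarrow> nat \<Rightarrow> nat \<Rightarrow> (vec \<Rightarrow> vec) \<Rightarrow> bool" where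
  "linear_on_Vn N L n P \<longleftrightarrow>
     (\<forall>f\<in>Vn N L n. \<forall>g\<in>Vn N L n. P (f + g) = P f + P g \<and> (\<forall>c. P (sc c f) = sc c (P f)))"

lemma linear_on_VnI:
  "(\<And>f g. P (f + g) = P f + P g) \<Longrightarrow> (\<And>c f. P (sc c f) = sc c (P f)) \<Longrightarrow> linear_on_Vn N L n P"
  by (simp add: linear_on_Vn_def)

lemma linear_on_Vn_zero: "linear_on_Vn N L n P \<Longrightarrow> P 0 = 0"
  unfolding linear_on_Vn_def using Vn_zero by (metis sc_zero)

lemma linear_on_Vn_sum:
  assumes P: "linear_on_Vn N L n P" and g: "\<And>x. x \<in> A \<Longrightarrow> g x \<in> Vn N L n"
  shows "P (\<Sum>x\<in>A. g x) = (\<Sum>x\<in>A. P (g x))"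
  using g
proof (induction A rule: infinite_finite_induct)
  case (insert x F)
  have "P (\<Sum>x\<in>insert x F. g x) = P (g x + (\<Sum>x\<in>F. g x))"
    using insert.hyps by (subst sum.insert) auto
  also have "\<dots> = P (g x) + P (\<Sum>x\<in>F. g x)"
    using P insert.prems unfolding linear_on_Vn_def by (meson Vn_sum insertCI)
  also have "\<dots> = (\<Sum>x\<in>insert x F. P (g x))"
    using insert by (subst sum.insert) auto
  finally show ?case .
qed (simp_all add: linear_on_Vn_zero[OF P])

lemma linear_on_Vn_expansion:
  assumes P: "linear_on_Vn N L n P" and f: "f \<in> Vn N L n"
  shows "P f = (\<Sum>x\<in>supp f. sc (f x) (P (bv x)))"
proof -
  have fin: "finite (supp f)" and w: "\<And>x. x \<in> supp f \<Longrightarrow> bv x \<in> Vn N L n"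
    using f by (auto simp: Vn_iff supp_bv)
  have "P f = (\<Sum>x\<in>supp f. P (sc (f x) (bv x)))"
    by (subst basis_expansion[OF fin], rule linear_on_Vn_sum[OF P]) (intro Vn_sc w)
  also have "\<dots> = (\<Sum>x\<in>supp f. sc (f x) (P (bv x)))"
    using P w unfolding linear_on_Vn_def by (intro sum.cong) blast+
  finally show ?thesis .
qed

lemma linear_on_Vn_eqI:
  assumes "linear_on_Vn N L n P" "linear_on_Vn N L n Q"
    and "\<And>x. wf_lbl N L n x \<Longrightarrow> P (bv x) = Q (bv x)" and f: "f \<in> Vn N L n"
  shows "P f = Q f"
  using f assms(3) by (auto simp: Vn_iff linear_on_Vn_expansion[OF assms(1) f]
      linear_on_Vn_expansion[OF assms(2) f] intro!: sum.cong)

lemma linear_on_Vn_image: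
  assumes "linear_on_Vn N L n P" "f \<in> Vn N L n"
    and "\<And>x. wf_lbl N L n x \<Longrightarrow> P (bv x) \<in> Vn N L n"
  shows "P f \<in> Vn N L n"
  unfolding linear_on_Vn_expansion[OF assms(1,2)] using assms(2,3)
  by (intro Vn_sum Vn_sc) (auto simp: Vn_iff)

lemma lin_bv [simp]: "lin F (bv x) = F x"
  by (rule ext) (simp add: lin_def bv_def)

lemma lin_eq_sum: "finite A \<Longrightarrow> supp f \<subseteq> A \<Longrightarrow> lin F f = (\<lambda>y. \<Sum>x\<in>A. f x * F x y)"
  unfolding lin_def supp_def[symmetric]
  by (rule ext, rule sum.mono_neutral_left) (auto simp: supp_def)

lemma linear_on_Vn_lin: "linear_on_Vn N L n (lin F)"
  unfolding linear_on_Vn_def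
proof (intro ballI conjI allI)
  fix f g assume "f \<in> Vn N L n" "g \<in> Vn N L n"
  then have fin: "finite (supp f \<union> supp g)" by (simp add: Vn_iff)
  show "lin F (f + g) = lin F f + lin F g"
    using lin_eq_sum[OF fin, of "f + g"] lin_eq_sum[OF fin, of f] lin_eq_sum[OF fin, of g] supp_add
    by (auto simp: algebra_simps sum.distrib)
  fix c
  show "lin F (sc c f) = sc c (lin F f)"
    using lin_eq_sum[OF fin, of "sc c f"] lin_eq_sum[OF fin, of f] supp_sc[of c f]
    by (auto simp: sc_def algebra_simps sum_distrib_left)
qed

lemma lin_Vn:
  "f \<in> Vn N L n \<Longrightarrow> (\<And>x. wf_lbl N L n x \<Longrightarrow> F x \<in> Vn N L n) \<Longrightarrow> lin F f \<in> Vn N L n"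
  by (rule linear_on_Vn_image[OF linear_on_Vn_lin]) simp_all

lemma wf_lbl_iff: "wf_lbl N L n (ex, es, vs) \<longleftrightarrow> length ex = n \<and> length es = n \<and> length vs = n \<and>
    (\<forall>a\<in>set es. 1 \<le> a \<and> a \<le> L) \<and> (\<forall>b\<in>set vs. 1 \<le> b \<and> b \<le> N)"
  by (simp add: wf_lbl_def)

lemma swp_length [simp]: "length (swp i xs) = length xs"
  by (simp add: swp_def)

lemma swp_nth: "1 \<le> i \<Longrightarrow> i < length xs \<Longrightarrow> j < length xs \<Longrightarrow>
    swp i xs ! j = (if j = i - 1 then xs ! i else if j = i then xs ! (i - 1) else xs ! j)"
  by (auto simp: swp_def nth_list_update)

lemma swp_swp: "1 \<le> i \<Longrightarrow> i < length xs \<Longrightarrow> swp i (swp i xs) = xs"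
  by (rule nth_equalityI) (auto simp: swp_nth)

lemma swp_eq_iff: "1 \<le> i \<Longrightarrow> i < length ys \<Longrightarrow> swp i xs = ys \<longleftrightarrow> xs = swp i ys"
  by (metis swp_length swp_swp)

lemma swp_same: "1 \<le> i \<Longrightarrow> i < length xs \<Longrightarrow> xs ! (i - 1) = xs ! i \<Longrightarrow> swp i xs = xs"
  by (rule nth_equalityI) (auto simp: swp_nth)

lemma set_swp: "1 \<le> i \<Longrightarrow> i < length xs \<Longrightarrow> set (swp i xs) = set xs"
  unfolding swp_def by (metis mset_swap less_imp_diff_less mset_eq_setD)

definition swap_pos :: "nat \<Rightarrow> lbl \<Rightarrow> lbl" where
  "swap_pos i x = (case x of (ex, es, vs) \<Rightarrow> (swp i ex, swp i es, vs))"

definition swap_e :: "nat \<Rightarrow> lbl \<Rightarrow> lbl" where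
  "swap_e i x = (case x of (ex, es, vs) \<Rightarrow> (ex, swp i es, vs))"

definition swap_v :: "nat \<Rightarrow> lbl \<Rightarrow> lbl" where
  "swap_v i x = (case x of (ex, es, vs) \<Rightarrow> (ex, es, swp i vs))"

context
  fixes n i :: nat assumes i: "1 \<le> i" "i < n"
begin

lemma wf_swap_pos: "wf_lbl N L n x \<Longrightarrow> wf_lbl N L n (swap_pos i x)"
  and wf_swap_e: "wf_lbl N L n x \<Longrightarrow> wf_lbl N L n (swap_e i x)"
  and wf_swap_v: "wf_lbl N L n x \<Longrightarrow> wf_lbl N L n (swap_v i x)"
  using i by (cases x; auto simp: swap_pos_def swap_e_def swap_v_def wf_lbl_iff set_swp)+

lemma swap_pos_swap_pos: "wf_lbl N L n x \<Longrightarrow> swap_pos i (swap_pos i x) = x"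
  and swap_e_swap_e: "wf_lbl N L n x \<Longrightarrow> swap_e i (swap_e i x) = x"
  and swap_v_swap_v: "wf_lbl N L n x \<Longrightarrow> swap_v i (swap_v i x) = x"
  using i by (cases x; auto simp: swap_pos_def swap_e_def swap_v_def wf_lbl_iff swp_swp)+

lemma swap_pos_shift_fst: "wf_lbl N L n x \<Longrightarrow> swap_pos i (shift i x) = shift (Suc i) (swap_pos i x)"
  and swap_pos_shift_snd: "wf_lbl N L n x \<Longrightarrow> swap_pos i (shift (Suc i) x) = shift i (swap_pos i x)"
  using i by (cases x; auto simp: swap_pos_def shift_def wf_lbl_iff swp_nth nth_list_update
      intro!: nth_equalityI)+

end

lemma wf_shift: "wf_lbl N L n (shift j x) \<longleftrightarrow> wf_lbl N L n x"
  by (cases x) (auto simp: shift_def wf_lbl_iff)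

lemma swap_e_shift: "swap_e i (shift j x) = shift j (swap_e i x)"
  by (cases x) (simp add: shift_def swap_e_def)

lemma fst_snd_shift [simp]: "fst (snd (shift j x)) = fst (snd x)"
  by (cases x) (simp add: shift_def)

lemma zmul_apply: "zmul j f (ex, es, vs) = f (ex[j - 1 := ex ! (j - 1) - 1], es, vs)"
  by (simp add: zmul_def)

lemma zmul_add: "zmul j (f + g) = zmul j f + zmul j g"
  and zmul_diff: "zmul j (f - g) = zmul j f - zmul j g"
  and zmul_minus: "zmul j (- f) = - zmul j f"
  and zmul_sc: "zmul j (sc c f) = sc c (zmul j f)"
  and zmul_const_vec: "zmul j (const_vec c * f) = const_vec c * zmul j f"
  by (rule ext; auto simp: zmul_def const_vec_def)+

lemma zmul_zero [simp]: "zmul j 0 = 0"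
  by (rule ext) (simp add: zmul_def split: prod.splits)

lemma zmul_comm: "zmul j (zmul k f) = zmul k (zmul j f)"
proof (rule ext)
  fix y :: lbl
  obtain ex es vs where y: "y = (ex, es, vs)" by (cases y)
  show "zmul j (zmul k f) y = zmul k (zmul j f) y"
    by (cases "j - 1 = k - 1") (simp_all add: y zmul_def list_update_swap nth_list_update)
qed

lemmas zmul_simps = zmul_add zmul_diff zmul_minus zmul_sc sc_add sc_diff sc_sc sc_minus

lemma zmul_bv: "zmul j (bv x) = bv (shift j x)"
proof (rule ext)
  fix y :: lbl
  obtain ex es vs where y: "y = (ex, es, vs)" by (cases y)
  obtain ex' es' vs' where x: "x = (ex', es', vs')" by (cases x)
  have "ex[j - 1 := ex ! (j - 1) - 1] = ex' \<longleftrightarrow> ex = ex'[j - 1 := ex' ! (j - 1) + 1]"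
    by (cases "j - 1 < length ex") (auto simp: list_update_beyond intro!: nth_equalityI)
  then show "zmul j (bv x) y = bv (shift j x) y"
    by (auto simp: y x zmul_apply bv_def shift_def)
qed

lemma supp_zmul: "y \<in> supp (zmul j g) \<Longrightarrow> \<exists>z\<in>supp g. y = shift j z"
proof -
  obtain ex es vs where y: "y = (ex, es, vs)" by (cases y)
  define z where "z = (ex[j - 1 := ex ! (j - 1) - 1], es, vs)"
  assume "y \<in> supp (zmul j g)"
  then have "z \<in> supp g" by (simp add: supp_def y z_def zmul_apply)
  moreover have "y = shift j z"
    by (cases "j - 1 < length ex") (auto simp: y z_def shift_def list_update_beyond intro!: nth_equalityI)
  ultimately show ?thesis by blast
qed

lemma linear_on_Vn_zmul: "linear_on_Vn N L n (zmul j)"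
  by (simp add: linear_on_VnI zmul_add zmul_sc)

lemma zmul_Vn: "f \<in> Vn N L n \<Longrightarrow> zmul j f \<in> Vn N L n"
  by (rule linear_on_Vn_image[OF linear_on_Vn_zmul]) (simp_all add: zmul_bv wf_shift Vn_bv)

lemma sop_add: "sop i (f + g) = sop i f + sop i g"
  and sop_diff: "sop i (f - g) = sop i f - sop i g"
  and sop_sc: "sop i (sc c f) = sc c (sop i f)"
  and sop_zero: "sop i 0 = 0"
  by (rule ext; auto simp: sop_def)+

lemma linear_on_Vn_sop: "linear_on_Vn N L n (sop i)"
  by (simp add: linear_on_VnI sop_add sop_sc)

context
  fixes n i :: nat assumes i: "1 \<le> i" "i < n"
begin

lemma sop_bv: "wf_lbl N L n x \<Longrightarrow> sop i (bv x) = bv (swap_pos i x)"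
  using i by (cases x) (auto simp: sop_def bv_def swap_pos_def wf_lbl_iff swp_eq_iff)

lemma sop_Vn: "f \<in> Vn N L n \<Longrightarrow> sop i f \<in> Vn N L n"
  by (rule linear_on_Vn_image[OF linear_on_Vn_sop]) (simp_all add: sop_bv Vn_bv wf_swap_pos[OF i])

lemma sop_sop: "f \<in> Vn N L n \<Longrightarrow> sop i (sop i f) = f"
proof (rule linear_on_Vn_eqI[of N L n "\<lambda>f. sop i (sop i f)" "\<lambda>f. f"])
  fix x assume "wf_lbl N L n x"
  then show "sop i (sop i (bv x)) = bv x"
    using sop_bv wf_swap_pos[OF i] swap_pos_swap_pos[OF i] by metis
qed (simp_all add: linear_on_VnI sop_add sop_sc)

lemma sop_zmul_fst: "f \<in> Vn N L n \<Longrightarrow> sop i (zmul i f) = zmul (Suc i) (sop i f)"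
  and sop_zmul_snd: "f \<in> Vn N L n \<Longrightarrow> sop i (zmul (Suc i) f) = zmul i (sop i f)"
  by (rule linear_on_Vn_eqI; simp add: linear_on_VnI zmul_add zmul_sc sop_add sop_sc zmul_bv
      sop_bv wf_shift swap_pos_shift_fst[OF i] swap_pos_shift_snd[OF i] wf_swap_pos[OF i])+

end

definition R_basis :: "nat \<Rightarrow> nat \<Rightarrow> lbl \<Rightarrow> vec" where
  "R_basis N i x = (let q = qpar N; X = bv x; a = fst (snd x) ! (i - 1); b = fst (snd x) ! i in
      if a = b then sc (q ^ 2) (zmul i X) - zmul (Suc i) X
      else sc q (zmul i X - zmul (Suc i) X)
           + sc (q ^ 2 - 1) (zmul (if b < a then i else Suc i) (bv (swap_e i x))))"

lemma Rop_eq_lin: "Rop N i = lin (R_basis N i)"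
  unfolding Rop_def R_basis_def
  by (rule arg_cong[where f = lin], rule ext) (auto simp: Let_def zmul_bv swap_e_def)

lemma Rop_bv: "Rop N i (bv x) = R_basis N i x"
  by (simp add: Rop_eq_lin)

lemma linear_on_Vn_Rop: "linear_on_Vn N L n (Rop N i)"
  by (simp add: Rop_eq_lin linear_on_Vn_lin)

lemma Rop_zero: "Rop N i 0 = 0"
  by (rule ext) (simp add: Rop_def lin_def)

lemma Rop_Vn: "1 \<le> i \<Longrightarrow> i < n \<Longrightarrow> f \<in> Vn N L n \<Longrightarrow> Rop N i f \<in> Vn N L n"
  unfolding Rop_eq_lin
  by (rule lin_Vn) (auto simp: R_basis_def Let_def intro!: Vn_add Vn_diff Vn_sc zmul_Vn Vn_bv wf_swap_e)

lemma R_basis_shift: "R_basis N i (shift j x) = zmul j (R_basis N i x)"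
  unfolding R_basis_def Let_def fst_snd_shift swap_e_shift zmul_bv[symmetric]
  by (simp add: zmul_simps zmul_comm)

lemma Rop_zmul: "f \<in> Vn N L n \<Longrightarrow> Rop N i (zmul j f) = zmul j (Rop N i f)"
  by (rule linear_on_Vn_eqI[of N L n "\<lambda>f. Rop N i (zmul j f)" "\<lambda>f. zmul j (Rop N i f)"])
    (use linear_on_Vn_Rop[of N L n i] zmul_Vn[of _ N L n j] in
      \<open>auto simp: linear_on_Vn_def zmul_add zmul_sc Rop_bv zmul_bv R_basis_shift\<close>)

section \<open>The operator T^c_i\<close>

definition Z1 :: "nat \<Rightarrow> vec \<Rightarrow> vec" where
  "Z1 i g = zmul i g - zmul (Suc i) g"

definition Z2 :: "nat \<Rightarrow> nat \<Rightarrow> vec \<Rightarrow> vec" where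
  "Z2 N i g = sc (qpar N ^ 2) (zmul (Suc i) g) - zmul i g"

definition Z3 :: "nat \<Rightarrow> nat \<Rightarrow> vec \<Rightarrow> vec" where
  "Z3 N i g = zmul i g - sc (qpar N ^ 2) (zmul (Suc i) g)"

lemmas Z_defs = Z1_def Z2_def Z3_def

definition Tc_eq :: "nat \<Rightarrow> nat \<Rightarrow> vec \<Rightarrow> vec \<Rightarrow> bool" where
  "Tc_eq N i f h \<longleftrightarrow> Z1 i (Z2 N i (h + f)) = Z3 N i (Z2 N i f - sop i (Rop N i f))"

lemma Tcop_eq_The: "Tcop N L n i f = (THE h. h \<in> Vn N L n \<and> Tc_eq N i f h)"
  by (simp add: Tcop_def Tc_eq_def Z_defs Let_def)

lemma Z2_Vn: "f \<in> Vn N L n \<Longrightarrow> Z2 N i f \<in> Vn N L n"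
  unfolding Z2_def by (intro Vn_diff Vn_sc zmul_Vn)

lemma Tc_eq_zero: "Tc_eq N i 0 0"
  by (simp add: Tc_eq_def Rop_zero sop_zero Z_defs)

lemma Rop_add: "f \<in> Vn N L n \<Longrightarrow> g \<in> Vn N L n \<Longrightarrow> Rop N i (f + g) = Rop N i f + Rop N i g"
  and Rop_sc: "f \<in> Vn N L n \<Longrightarrow> Rop N i (sc c f) = sc c (Rop N i f)"
  using linear_on_Vn_Rop[of N L n i] unfolding linear_on_Vn_def by blast+

lemma Tc_eq_add:
  assumes fg: "f \<in> Vn N L n" "g \<in> Vn N L n" and E: "Tc_eq N i f h" "Tc_eq N i g k"
  shows "Tc_eq N i (f + g) (h + k)"
proof -
  have "Z1 i (Z2 N i (h + k + (f + g))) = Z1 i (Z2 N i (h + f)) + Z1 i (Z2 N i (k + g))"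
    unfolding Z_defs by (simp only: zmul_simps) (simp add: algebra_simps)
  also have "\<dots> = Z3 N i (Z2 N i f - sop i (Rop N i f)) + Z3 N i (Z2 N i g - sop i (Rop N i g))"
    using E by (simp add: Tc_eq_def)
  also have "\<dots> = Z3 N i (Z2 N i (f + g) - sop i (Rop N i (f + g)))"
    unfolding Rop_add[OF fg] sop_add Z_defs by (simp only: zmul_simps) (simp add: algebra_simps)
  finally show ?thesis unfolding Tc_eq_def .
qed

lemma Tc_eq_sc:
  assumes f: "f \<in> Vn N L n" and E: "Tc_eq N i f h"
  shows "Tc_eq N i (sc c f) (sc c h)"
proof -
  have "Z1 i (Z2 N i (sc c h + sc c f)) = sc c (Z1 i (Z2 N i (h + f)))"
    unfolding Z_defs by (simp only: zmul_simps) (simp add: const_vec_simps zmul_const_vec algebra_simps)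
  also have "\<dots> = sc c (Z3 N i (Z2 N i f - sop i (Rop N i f)))"
    using E by (simp add: Tc_eq_def)
  also have "\<dots> = Z3 N i (Z2 N i (sc c f) - sop i (Rop N i (sc c f)))"
    unfolding Rop_sc[OF f] sop_sc Z_defs
    by (simp only: zmul_simps) (simp add: const_vec_simps zmul_const_vec algebra_simps)
  finally show ?thesis unfolding Tc_eq_def .
qed

lemma Tc_eq_sum:
  "(\<And>x. x \<in> A \<Longrightarrow> g x \<in> Vn N L n \<and> Tc_eq N i (g x) (k x)) \<Longrightarrow>
    Tc_eq N i (\<Sum>x\<in>A. g x) (\<Sum>x\<in>A. k x)"
proof (induction A rule: infinite_finite_induct)
  case (insert x F)
  have "Tc_eq N i (g x + (\<Sum>x\<in>F. g x)) (k x + (\<Sum>x\<in>F. k x))"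
    using insert by (intro Tc_eq_add) (auto intro!: Vn_sum)
  moreover have "sum g (insert x F) = g x + sum g F" "sum k (insert x F) = k x + sum k F"
    using sum.insert[OF insert.hyps(1,2)] by blast+
  ultimately show ?case by metis
qed (simp_all add: Tc_eq_zero)

text \<open>Compare coefficients at a label of the support whose i-th exponent is maximal.\<close>
lemma zmul_proportional_zero:
  assumes i: "1 \<le> i" "i < n" and g: "g \<in> Vn N L n" and \<alpha>: "\<alpha> \<noteq> 0"
    and e: "sc \<alpha> (zmul i g) = sc \<beta> (zmul (Suc i) g)"
  shows "g = 0"
proof (rule ccontr)
  assume "g \<noteq> 0"
  then have ne: "supp g \<noteq> {}" by (auto simp: supp_def)
  have fin: "finite (supp g)" and w: "\<And>x. x \<in> supp g \<Longrightarrow> wf_lbl N L n x"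
    using g by (auto simp: Vn_iff)
  define m where "m = Max ((\<lambda>x. fst x ! (i - 1)) ` supp g)"
  have "m \<in> (\<lambda>x. fst x ! (i - 1)) ` supp g"
    unfolding m_def using fin ne by (intro Max_in) auto
  then obtain x where x: "x \<in> supp g" "fst x ! (i - 1) = m" by blast
  have max: "\<And>z. z \<in> supp g \<Longrightarrow> fst z ! (i - 1) \<le> m"
    unfolding m_def using fin by auto
  obtain ex es vs where xe: "x = (ex, es, vs)" by (cases x)
  have len: "length ex = n" using w[OF x(1)] xe by (simp add: wf_lbl_iff)
  define ey where "ey = ex[i - 1 := ex ! (i - 1) + 1]"
  define z where "z = (ey[i := ey ! i - 1], es, vs)"
  have "fst z ! (i - 1) = m + 1"
    using len i x(2) by (simp add: z_def ey_def xe nth_list_update)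
  then have "g z = 0" using max by (fastforce simp: supp_def)
  moreover have "ey[i - 1 := ey ! (i - 1) - 1] = ex"
    using len i by (auto simp: ey_def intro!: nth_equalityI)
  moreover have "\<alpha> * g (ey[i - 1 := ey ! (i - 1) - 1], es, vs) = \<beta> * g z"
    using fun_cong[OF e, of "(ey, es, vs)"] by (simp add: zmul_apply z_def)
  ultimately have "g x = 0" using \<alpha> by (simp add: xe)
  then show False using x(1) by (simp add: supp_def)
qed

lemma Tc_eq_unique:
  assumes i: "1 \<le> i" "i < n" and h: "h1 \<in> Vn N L n" "h2 \<in> Vn N L n"
    and E: "Tc_eq N i f h1" "Tc_eq N i f h2"
  shows "h1 = h2"
proof -
  define d where "d = h1 - h2"
  have d: "d \<in> Vn N L n" using h by (auto simp: d_def)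
  have "Z1 i (Z2 N i d) = Z1 i (Z2 N i (h1 + f)) - Z1 i (Z2 N i (h2 + f))"
    unfolding Z_defs d_def by (simp only: zmul_simps) (simp add: algebra_simps)
  then have "Z1 i (Z2 N i d) = 0" using E by (simp add: Tc_eq_def)
  then have "Z2 N i d = 0"
    using zmul_proportional_zero[OF i Z2_Vn[OF d], where \<alpha> = 1 and \<beta> = 1] by (simp add: Z1_def)
  then have "d = 0"
    using zmul_proportional_zero[OF i d, where \<alpha> = 1 and \<beta> = "qpar N ^ 2"] by (simp add: Z2_def)
  then show ?thesis by (simp add: d_def)
qed

lemma Tcop_eqI: "1 \<le> i \<Longrightarrow> i < n \<Longrightarrow> h \<in> Vn N L n \<Longrightarrow> Tc_eq N i f h \<Longrightarrow> Tcop N L n i f = h"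
  unfolding Tcop_eq_The by (rule the_equality) (auto intro: Tc_eq_unique)

text \<open>The affine Hecke relations T z_i = z_{i+1} T + (1 - q^2) z_{i+1} and
  T z_{i+1} = z_i T + (q^2 - 1) z_{i+1}, in terms of the defining equation of T = T^c_i.\<close>
lemma Tc_eq_zmul_fst:
  assumes i: "1 \<le> i" "i < n" and f: "f \<in> Vn N L n" and E: "Tc_eq N i f h"
  shows "Tc_eq N i (zmul i f) (zmul (Suc i) h + sc (1 - qpar N ^ 2) (zmul (Suc i) f))"
proof -
  let ?S = "sop i (Rop N i f)"
  have S: "sop i (Rop N i (zmul i f)) = zmul (Suc i) ?S"
    using Rop_zmul[OF f] sop_zmul_fst[OF i Rop_Vn[OF i f]] by simp
  have "Z1 i (Z2 N i (zmul (Suc i) h + sc (1 - qpar N ^ 2) (zmul (Suc i) f) + zmul i f))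
      = zmul (Suc i) (Z1 i (Z2 N i (h + f))) + Z1 i (Z2 N i (Z3 N i f))"
    and "Z3 N i (Z2 N i (zmul i f) - zmul (Suc i) ?S)
      = zmul (Suc i) (Z3 N i (Z2 N i f - ?S)) + Z1 i (Z2 N i (Z3 N i f))"
    unfolding Z_defs by (simp only: zmul_simps; simp add: const_vec_simps zmul_const_vec zmul_comm algebra_simps)+
  with E S show ?thesis by (simp add: Tc_eq_def)
qed

lemma Tc_eq_zmul_snd:
  assumes i: "1 \<le> i" "i < n" and f: "f \<in> Vn N L n" and E: "Tc_eq N i f h"
  shows "Tc_eq N i (zmul (Suc i) f) (zmul i h + sc (qpar N ^ 2 - 1) (zmul (Suc i) f))"
proof -
  let ?S = "sop i (Rop N i f)"
  have S: "sop i (Rop N i (zmul (Suc i) f)) = zmul i ?S"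
    using Rop_zmul[OF f] sop_zmul_snd[OF i Rop_Vn[OF i f]] by simp
  have "Z1 i (Z2 N i (zmul i h + sc (qpar N ^ 2 - 1) (zmul (Suc i) f) + zmul (Suc i) f))
      = zmul i (Z1 i (Z2 N i (h + f))) + Z1 i (Z2 N i (Z2 N i f))"
    and "Z3 N i (Z2 N i (zmul (Suc i) f) - zmul i ?S)
      = zmul i (Z3 N i (Z2 N i f - ?S)) + Z1 i (Z2 N i (Z2 N i f))"
    unfolding Z_defs by (simp only: zmul_simps; simp add: const_vec_simps zmul_const_vec zmul_comm algebra_simps)+
  with E S show ?thesis by (simp add: Tc_eq_def)
qed

definition Tc_diag :: "nat \<Rightarrow> nat \<Rightarrow> lbl \<Rightarrow> vec" where
  "Tc_diag N i x = (let X = bv x; Xs = bv (swap_e i x); q = qpar N;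
       a = fst (snd x) ! (i - 1); b = fst (snd x) ! i in
     if a = b then - X else if a < b then sc (q ^ 2 - 1) X - sc q Xs else - sc q Xs)"

lemma Tc_eq_diag:
  assumes i: "1 \<le> i" "i < n" and w: "wf_lbl N L n x" and eq: "fst x ! (i - 1) = fst x ! i"
  shows "Tc_eq N i (bv x) (Tc_diag N i x)"
proof -
  obtain ex es vs where xe: "x = (ex, es, vs)" by (cases x)
  have len: "length ex = n" "length es = n" using w xe by (auto simp: wf_lbl_iff)
  have ws: "wf_lbl N L n (swap_e i x)" using wf_swap_e[OF i w] .
  have exs: "swp i ex = ex" using swp_same[of i ex] eq len i by (simp add: xe)
  have sX: "sop i (bv x) = bv (swap_e i x)"
    using sop_bv[OF i w] exs by (simp add: xe swap_pos_def swap_e_def)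
  have sXs: "sop i (bv (swap_e i x)) = bv x"
    using sop_bv[OF i ws] swp_swp[of i es] len i exs by (simp add: xe swap_pos_def swap_e_def)
  have X: "bv x \<in> Vn N L n" "bv (swap_e i x) \<in> Vn N L n" using w ws by auto
  note s = sop_zmul_fst[OF i X(1)] sop_zmul_fst[OF i X(2)] sop_zmul_snd[OF i X(1)] sop_zmul_snd[OF i X(2)]
  consider "es ! (i - 1) = es ! i" | "es ! (i - 1) < es ! i" | "es ! i < es ! (i - 1)" by linarith
  then show ?thesis
  proof cases
    case 1
    have xs: "swap_e i x = x" using swp_same[of i es] 1 len i by (simp add: xe swap_e_def)
    have "sop i (Rop N i (bv x)) = sc (qpar N ^ 2) (zmul (Suc i) (bv x)) - zmul i (bv x)"
      using 1 sX s unfolding xs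
      by (simp add: Rop_bv R_basis_def Let_def xe xs[unfolded xe] sop_diff sop_sc del: One_nat_def)
    moreover have "Tc_diag N i x = - bv x" using 1 by (simp add: Tc_diag_def xe Let_def)
    ultimately show ?thesis unfolding Tc_eq_def Z_defs
      by (simp only: zmul_simps) (simp add: const_vec_simps zmul_const_vec zmul_comm algebra_simps)
  next
    case 2
    have "sop i (Rop N i (bv x)) = sc (qpar N) (zmul (Suc i) (bv (swap_e i x)) - zmul i (bv (swap_e i x)))
        + sc (qpar N ^ 2 - 1) (zmul i (bv x))"
      using 2 sX sXs s by (simp add: Rop_bv R_basis_def Let_def xe sop_add sop_diff sop_sc del: One_nat_def)
    moreover have "Tc_diag N i x = sc (qpar N ^ 2 - 1) (bv x) - sc (qpar N) (bv (swap_e i x))"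
      using 2 by (simp add: Tc_diag_def xe Let_def)
    ultimately show ?thesis unfolding Tc_eq_def Z_defs
      by (simp only: zmul_simps) (simp add: const_vec_simps zmul_const_vec zmul_comm algebra_simps)
  next
    case 3
    have "sop i (Rop N i (bv x)) = sc (qpar N) (zmul (Suc i) (bv (swap_e i x)) - zmul i (bv (swap_e i x)))
        + sc (qpar N ^ 2 - 1) (zmul (Suc i) (bv x))"
      using 3 sX sXs s by (simp add: Rop_bv R_basis_def Let_def xe sop_add sop_diff sop_sc del: One_nat_def)
    moreover have "Tc_diag N i x = - sc (qpar N) (bv (swap_e i x))"
      using 3 by (simp add: Tc_diag_def xe Let_def)
    ultimately show ?thesis unfolding Tc_eq_def Z_defs
      by (simp only: zmul_simps) (simp add: const_vec_simps zmul_const_vec zmul_comm algebra_simps)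
  qed
qed

lemma Tc_diag_Vn: "1 \<le> i \<Longrightarrow> i < n \<Longrightarrow> wf_lbl N L n x \<Longrightarrow> Tc_diag N i x \<in> Vn N L n"
  using wf_swap_e[of i n N L x] by (auto simp: Tc_diag_def Let_def intro!: Vn_diff Vn_sc Vn_bv Vn_uminus)

lemma supp_Tc_diag: "y \<in> supp (Tc_diag N i x) \<Longrightarrow> y = x \<or> y = swap_e i x"
  by (auto simp: Tc_diag_def Let_def supp_def bv_def split: if_splits)

text \<open>Solutions for a basis label are supported on labels obtained by moving exponent between
  positions i and i+1 towards the middle; this is what makes T^c_i preserve the degree
  and the bound on the exponents.\<close>
definition in_box :: "nat \<Rightarrow> nat \<Rightarrow> nat \<Rightarrow> nat \<Rightarrow> lbl \<Rightarrow> lbl \<Rightarrow> bool" where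
  "in_box N L n i x y \<longleftrightarrow> wf_lbl N L n y \<and> snd (snd y) = snd (snd x) \<and>
     (\<forall>j<n. j \<noteq> i - 1 \<and> j \<noteq> i \<longrightarrow> fst y ! j = fst x ! j \<and> fst (snd y) ! j = fst (snd x) ! j) \<and>
     fst y ! (i - 1) + fst y ! i = fst x ! (i - 1) + fst x ! i \<and>
     min (fst x ! (i - 1)) (fst x ! i) \<le> fst y ! (i - 1) \<and>
     fst y ! (i - 1) \<le> max (fst x ! (i - 1)) (fst x ! i) \<and>
     (fst x ! i < fst x ! (i - 1) \<longrightarrow> fst y ! (i - 1) < fst x ! (i - 1))"

definition unshift :: "nat \<Rightarrow> lbl \<Rightarrow> lbl" where
  "unshift j x = (case x of (ex, es, vs) \<Rightarrow> (ex[j - 1 := ex ! (j - 1) - 1], es, vs))"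

lemma shift_unshift: "shift j (unshift j x) = x"
proof -
  obtain ex es vs where x: "x = (ex, es, vs)" by (cases x)
  have "(ex[j - 1 := ex ! (j - 1) - 1])[j - 1 := (ex[j - 1 := ex ! (j - 1) - 1]) ! (j - 1) + 1] = ex"
    by (cases "j - 1 < length ex") (auto simp: list_update_beyond)
  then show ?thesis by (simp add: x shift_def unshift_def)
qed

lemma wf_lbl_update_exp [simp]: "wf_lbl N L n (ex[k := a], es, vs) \<longleftrightarrow> wf_lbl N L n (ex, es, vs)"
  by (simp add: wf_lbl_iff)

lemma wf_unshift: "wf_lbl N L n (unshift j x) \<longleftrightarrow> wf_lbl N L n x"
  by (cases x) (auto simp: unshift_def wf_lbl_iff)

lemma in_box_refl: "wf_lbl N L n x \<Longrightarrow> fst x ! (i - 1) \<le> fst x ! i \<Longrightarrow> in_box N L n i x x"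
  by (simp add: in_box_def)

lemma in_box_swap_e:
  "1 \<le> i \<Longrightarrow> i < n \<Longrightarrow> wf_lbl N L n x \<Longrightarrow> fst x ! (i - 1) = fst x ! i \<Longrightarrow> in_box N L n i x (swap_e i x)"
  using wf_swap_e[of i n N L x] by (cases x) (auto simp: in_box_def swap_e_def swp_nth wf_lbl_iff)

lemma in_box_shift_snd:
  assumes i: "1 \<le> i" "i < n" and w: "wf_lbl N L n x" and le: "fst x ! i \<le> fst x ! (i - 1)"
    and z: "z = x \<or> in_box N L n i x z"
  shows "in_box N L n i (shift i x) (shift (Suc i) z)"
proof -
  obtain ex es vs where x: "x = (ex, es, vs)" by (cases x)
  obtain ez esz vsz where ze: "z = (ez, esz, vsz)" by (cases z)
  have wz: "wf_lbl N L n z" using z w by (auto simp: in_box_def)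
  then have "length ex = n" "length ez = n" using w by (simp_all add: x ze wf_lbl_iff)
  with i le z wz show ?thesis
    by (auto simp: in_box_def x ze shift_def nth_list_update)
qed

lemma in_box_shift_fst:
  assumes i: "1 \<le> i" "i < n" and w: "wf_lbl N L n x" and le: "fst x ! (i - 1) \<le> fst x ! i"
    and z: "in_box N L n i x z"
  shows "in_box N L n i (shift (Suc i) x) (shift i z)"
proof -
  obtain ex es vs where x: "x = (ex, es, vs)" by (cases x)
  obtain ez esz vsz where ze: "z = (ez, esz, vsz)" by (cases z)
  have wz: "wf_lbl N L n z" using z by (auto simp: in_box_def)
  then have "length ex = n" "length ez = n" using w by (simp_all add: x ze wf_lbl_iff)
  with i le z wz show ?thesis
    by (auto simp: in_box_def x ze shift_def nth_list_update)
qed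

lemma exp_gap_induct:
  assumes i: "1 \<le> i" "i < n" and w: "wf_lbl N L n x"
    and diag: "\<And>x. wf_lbl N L n x \<Longrightarrow> fst x ! (i - 1) = fst x ! i \<Longrightarrow> P x"
    and step_fst: "\<And>x. wf_lbl N L n x \<Longrightarrow> fst x ! i \<le> fst x ! (i - 1) \<Longrightarrow> P x \<Longrightarrow> P (shift i x)"
    and step_snd: "\<And>x. wf_lbl N L n x \<Longrightarrow> fst x ! (i - 1) \<le> fst x ! i \<Longrightarrow> P x \<Longrightarrow> P (shift (Suc i) x)"
  shows "P x"
  using w
proof (induction "nat \<bar>fst x ! (i - 1) - fst x ! i\<bar>" arbitrary: x rule: less_induct)
  case less
  have len: "length (fst x) = n" using less.prems by (cases x) (simp add: wf_lbl_iff)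
  consider "fst x ! (i - 1) = fst x ! i" | "fst x ! i < fst x ! (i - 1)" | "fst x ! (i - 1) < fst x ! i"
    by linarith
  then show ?case
  proof cases
    case 1
    then show ?thesis using diag less.prems by blast
  next
    case 2
    define x' where "x' = unshift i x"
    have w': "wf_lbl N L n x'" and sx: "shift i x' = x"
      using less.prems by (simp_all add: x'_def wf_unshift shift_unshift)
    have "fst x' ! (i - 1) = fst x ! (i - 1) - 1" "fst x' ! i = fst x ! i"
      using len i by (cases x; simp add: x'_def unshift_def nth_list_update)+
    then show ?thesis using less.hyps[OF _ w'] step_fst[OF w'] sx 2 by simp
  next
    case 3
    define x' where "x' = unshift (Suc i) x"
    have w': "wf_lbl N L n x'" and sx: "shift (Suc i) x' = x"
      using less.prems by (simp_all add: x'_def wf_unshift shift_unshift)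
    have "fst x' ! (i - 1) = fst x ! (i - 1)" "fst x' ! i = fst x ! i - 1"
      using len i by (cases x; simp add: x'_def unshift_def nth_list_update)+
    then show ?thesis using less.hyps[OF _ w'] step_snd[OF w'] sx 3 by simp
  qed
qed

definition has_boxed_solution :: "nat \<Rightarrow> nat \<Rightarrow> nat \<Rightarrow> nat \<Rightarrow> lbl \<Rightarrow> bool" where
  "has_boxed_solution N L n i x \<longleftrightarrow>
     (\<exists>h\<in>Vn N L n. Tc_eq N i (bv x) h \<and> (\<forall>y\<in>supp h. in_box N L n i x y))"

context
  fixes N L n i :: nat assumes i: "1 \<le> i" "i < n"
begin

lemma has_boxed_solution_diag:
  assumes w: "wf_lbl N L n x" and eq: "fst x ! (i - 1) = fst x ! i"
  shows "has_boxed_solution N L n i x"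
proof -
  have "in_box N L n i x y" if "y \<in> supp (Tc_diag N i x)" for y
    using supp_Tc_diag[OF that] in_box_refl[OF w] in_box_swap_e[OF i w] eq by auto
  then show ?thesis
    using Tc_eq_diag[OF i w eq] Tc_diag_Vn[OF i w] unfolding has_boxed_solution_def by blast
qed

lemma has_boxed_solution_shift_fst:
  assumes w: "wf_lbl N L n x" and le: "fst x ! i \<le> fst x ! (i - 1)"
    and "has_boxed_solution N L n i x"
  shows "has_boxed_solution N L n i (shift i x)"
proof -
  obtain h where h: "h \<in> Vn N L n" "Tc_eq N i (bv x) h" "\<forall>y\<in>supp h. in_box N L n i x y"
    using assms(3) unfolding has_boxed_solution_def by blast
  define h' where "h' = zmul (Suc i) h + sc (1 - qpar N ^ 2) (zmul (Suc i) (bv x))"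
  have "Tc_eq N i (bv (shift i x)) h'"
    unfolding h'_def zmul_bv[symmetric] using Tc_eq_zmul_fst[OF i Vn_bv[OF w] h(2)] .
  moreover have "h' \<in> Vn N L n"
    unfolding h'_def using h(1) w by (intro Vn_add Vn_sc zmul_Vn Vn_bv)
  moreover have "in_box N L n i (shift i x) y" if y: "y \<in> supp h'" for y
  proof -
    have "y \<in> supp (zmul (Suc i) h) \<or> y \<in> supp (zmul (Suc i) (bv x))"
      using y supp_add supp_sc unfolding h'_def by blast
    then obtain z where "y = shift (Suc i) z" "z = x \<or> in_box N L n i x z"
      using supp_zmul h(3) supp_bv by (metis singletonD)
    then show ?thesis using in_box_shift_snd[OF i w le] by blast
  qed
  ultimately show ?thesis unfolding has_boxed_solution_def by blast
qed

lemma has_boxed_solution_shift_snd: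
  assumes w: "wf_lbl N L n x" and le: "fst x ! (i - 1) \<le> fst x ! i"
    and "has_boxed_solution N L n i x"
  shows "has_boxed_solution N L n i (shift (Suc i) x)"
proof -
  obtain h where h: "h \<in> Vn N L n" "Tc_eq N i (bv x) h" "\<forall>y\<in>supp h. in_box N L n i x y"
    using assms(3) unfolding has_boxed_solution_def by blast
  define h' where "h' = zmul i h + sc (qpar N ^ 2 - 1) (zmul (Suc i) (bv x))"
  have "Tc_eq N i (bv (shift (Suc i) x)) h'"
    unfolding h'_def zmul_bv[symmetric] using Tc_eq_zmul_snd[OF i Vn_bv[OF w] h(2)] .
  moreover have "h' \<in> Vn N L n"
    unfolding h'_def using h(1) w by (intro Vn_add Vn_sc zmul_Vn Vn_bv)
  moreover have "in_box N L n i (shift (Suc i) x) y" if y: "y \<in> supp h'" for y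
  proof -
    have "y \<in> supp (zmul i h) \<or> y \<in> supp (bv (shift (Suc i) x))"
      using y supp_add supp_sc unfolding h'_def zmul_bv by blast
    then consider z where "z \<in> supp h" "y = shift i z" | "y = shift (Suc i) x"
      using supp_zmul[of y i h] by (auto simp: supp_bv)
    then show ?thesis
    proof cases
      case 1
      then show ?thesis using in_box_shift_fst[OF i w le] h(3) by blast
    next
      case 2
      have "fst (shift (Suc i) x) ! (i - 1) \<le> fst (shift (Suc i) x) ! i"
        using le i w by (cases x) (auto simp: shift_def wf_lbl_iff nth_list_update)
      then show ?thesis using in_box_refl[of N L n "shift (Suc i) x"] w 2 by (simp add: wf_shift)
    qed
  qed
  ultimately show ?thesis unfolding has_boxed_solution_def by blast
qed

lemma has_boxed_solution: "wf_lbl N L n x \<Longrightarrow> has_boxed_solution N L n i x"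
  by (rule exp_gap_induct[OF i])
    (blast intro: has_boxed_solution_diag has_boxed_solution_shift_fst has_boxed_solution_shift_snd)+

end

lemma Fract_power: "Fraction_Field.Fract a 1 ^ k = Fraction_Field.Fract (a ^ k) 1"
  by (induction k) (simp_all add: One_fract_def)

lemma qpar_eq_Fract: "qpar N = Fraction_Field.Fract ([:0, 1:] ^ (2 * N)) 1"
  by (simp add: qpar_def Fract_power)

lemma qpar_nonzero: "qpar N \<noteq> 0"
  by (simp add: qpar_eq_Fract Zero_fract_def eq_fract)

lemma one_plus_qpar_sq_nonzero: "1 + qpar N ^ 2 \<noteq> 0"
proof -
  define p :: "rat poly" where "p = 1 + ([:0, 1:] ^ (2 * N)) ^ 2"
  have "1 + qpar N ^ 2 = Fraction_Field.Fract p 1"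
    by (simp add: qpar_eq_Fract p_def One_fract_def Fract_power)
  moreover have "poly p 1 = 2" by (simp add: p_def)
  then have "p \<noteq> 0" by auto
  ultimately show ?thesis by (simp add: Zero_fract_def eq_fract)
qed

context
  fixes N L n i :: nat assumes i: "1 \<le> i" "i < n"
begin

lemma Tc_bv:
  assumes w: "wf_lbl N L n x"
  shows "Tcop N L n i (bv x) \<in> Vn N L n" and "Tc_eq N i (bv x) (Tcop N L n i (bv x))"
    and "\<And>y. y \<in> supp (Tcop N L n i (bv x)) \<Longrightarrow> in_box N L n i x y"
proof -
  obtain h where "h \<in> Vn N L n" "Tc_eq N i (bv x) h" "\<forall>y\<in>supp h. in_box N L n i x y"
    using has_boxed_solution[OF i w] unfolding has_boxed_solution_def by blast
  with Tcop_eqI[OF i] show "Tcop N L n i (bv x) \<in> Vn N L n" "Tc_eq N i (bv x) (Tcop N L n i (bv x))"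
    "\<And>y. y \<in> supp (Tcop N L n i (bv x)) \<Longrightarrow> in_box N L n i x y" by simp_all
qed

lemma Tc_Vn_eq:
  assumes f: "f \<in> Vn N L n"
  shows "Tcop N L n i f \<in> Vn N L n \<and> Tc_eq N i f (Tcop N L n i f)"
proof -
  have fin: "finite (supp f)" and w: "\<And>x. x \<in> supp f \<Longrightarrow> wf_lbl N L n x"
    using f by (auto simp: Vn_iff)
  define h where "h = (\<Sum>x\<in>supp f. sc (f x) (Tcop N L n i (bv x)))"
  have hV: "h \<in> Vn N L n"
    unfolding h_def using Tc_bv(1) w by (intro Vn_sum Vn_sc) blast
  have "Tc_eq N i (\<Sum>x\<in>supp f. sc (f x) (bv x)) h"
    unfolding h_def using Tc_bv(2) w by (intro Tc_eq_sum) (blast intro: Tc_eq_sc Vn_sc Vn_bv)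
  then have "Tc_eq N i f h" using basis_expansion[OF fin] by metis
  with hV show ?thesis using Tcop_eqI[OF i hV] by simp
qed

lemma Tc_Vn: "f \<in> Vn N L n \<Longrightarrow> Tcop N L n i f \<in> Vn N L n"
  using Tc_Vn_eq by blast

lemma Tc_add: "f \<in> Vn N L n \<Longrightarrow> g \<in> Vn N L n \<Longrightarrow>
    Tcop N L n i (f + g) = Tcop N L n i f + Tcop N L n i g"
  using Tcop_eqI[OF i] Tc_eq_add Tc_Vn_eq by (meson Vn_add)

lemma Tc_sc: "f \<in> Vn N L n \<Longrightarrow> Tcop N L n i (sc c f) = sc c (Tcop N L n i f)"
  using Tcop_eqI[OF i] Tc_eq_sc Tc_Vn_eq by (meson Vn_sc)

lemma linear_on_Vn_Tc: "linear_on_Vn N L n (Tcop N L n i)"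
  unfolding linear_on_Vn_def using Tc_add Tc_sc by blast

lemma Tc_diff: "f \<in> Vn N L n \<Longrightarrow> g \<in> Vn N L n \<Longrightarrow>
    Tcop N L n i (f - g) = Tcop N L n i f - Tcop N L n i g"
proof -
  assume f: "f \<in> Vn N L n" and g: "g \<in> Vn N L n"
  have "Tcop N L n i (f + sc (- 1) g) = Tcop N L n i f + sc (- 1) (Tcop N L n i g)"
    using Tc_add[OF f Vn_sc[OF g]] Tc_sc[OF g] by simp
  then show ?thesis by (simp add: sc_minus_one)
qed

lemma Tc_minus: "f \<in> Vn N L n \<Longrightarrow> Tcop N L n i (- f) = - Tcop N L n i f"
  using Tc_sc[of f "- 1"] by (simp add: sc_minus_one)

lemma Tc_zmul_fst: "g \<in> Vn N L n \<Longrightarrow>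
    Tcop N L n i (zmul i g) = zmul (Suc i) (Tcop N L n i g) + sc (1 - qpar N ^ 2) (zmul (Suc i) g)"
  using Tc_eq_zmul_fst[OF i] Tc_Vn_eq Tcop_eqI[OF i] by (meson Vn_add Vn_sc zmul_Vn)

lemma Tc_zmul_snd: "g \<in> Vn N L n \<Longrightarrow>
    Tcop N L n i (zmul (Suc i) g) = zmul i (Tcop N L n i g) + sc (qpar N ^ 2 - 1) (zmul (Suc i) g)"
  using Tc_eq_zmul_snd[OF i] Tc_Vn_eq Tcop_eqI[OF i] by (meson Vn_add Vn_sc zmul_Vn)

lemma Tc_bv_diag: "wf_lbl N L n x \<Longrightarrow> fst x ! (i - 1) = fst x ! i \<Longrightarrow> Tcop N L n i (bv x) = Tc_diag N i x"
  using Tc_eq_diag[OF i] Tc_diag_Vn[OF i] Tcop_eqI[OF i] by blast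

definition hecke_at :: "vec \<Rightarrow> bool" where
  "hecke_at g \<longleftrightarrow>
     Tcop N L n i (Tcop N L n i g) = sc (qpar N ^ 2 - 1) (Tcop N L n i g) + sc (qpar N ^ 2) g"

lemma hecke_at_zmul_fst:
  assumes g: "g \<in> Vn N L n" and H: "hecke_at g"
  shows "hecke_at (zmul i g)"
proof -
  let ?T = "Tcop N L n i"
  have Tg: "?T g \<in> Vn N L n" using Tc_Vn[OF g] .
  have "?T (?T (zmul i g)) = ?T (zmul (Suc i) (?T g)) + sc (1 - qpar N ^ 2) (?T (zmul (Suc i) g))"
    unfolding Tc_zmul_fst[OF g] using g Tg by (simp add: Tc_add Tc_sc zmul_Vn Vn_sc)
  also have "\<dots> = zmul i (?T (?T g)) + sc (qpar N ^ 2 - 1) (zmul (Suc i) (?T g))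
      + sc (1 - qpar N ^ 2) (zmul i (?T g) + sc (qpar N ^ 2 - 1) (zmul (Suc i) g))"
    by (simp add: Tc_zmul_snd[OF Tg] Tc_zmul_snd[OF g])
  finally show ?thesis
    using H unfolding hecke_at_def Tc_zmul_fst[OF g]
    by (simp only: zmul_simps) (simp add: const_vec_simps zmul_const_vec algebra_simps)
qed

lemma hecke_at_zmul_snd:
  assumes g: "g \<in> Vn N L n" and H: "hecke_at g"
  shows "hecke_at (zmul (Suc i) g)"
proof -
  let ?T = "Tcop N L n i"
  have Tg: "?T g \<in> Vn N L n" using Tc_Vn[OF g] .
  have "?T (?T (zmul (Suc i) g)) = ?T (zmul i (?T g))
      + sc (qpar N ^ 2 - 1) (zmul i (?T g) + sc (qpar N ^ 2 - 1) (zmul (Suc i) g))"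
    using g Tg by (simp add: Tc_zmul_snd Tc_add Tc_sc zmul_Vn Vn_sc)
  also have "\<dots> = zmul (Suc i) (?T (?T g)) + sc (1 - qpar N ^ 2) (zmul (Suc i) (?T g))
      + sc (qpar N ^ 2 - 1) (zmul i (?T g) + sc (qpar N ^ 2 - 1) (zmul (Suc i) g))"
    by (simp add: Tc_zmul_fst[OF Tg])
  finally show ?thesis
    using H unfolding hecke_at_def Tc_zmul_snd[OF g]
    by (simp only: zmul_simps) (simp add: const_vec_simps zmul_const_vec algebra_simps)
qed

lemma hecke_at_diag:
  assumes w: "wf_lbl N L n x" and eq: "fst x ! (i - 1) = fst x ! i"
  shows "hecke_at (bv x)"
proof -
  let ?xs = "swap_e i x" and ?q = "qpar N"
  have ws: "wf_lbl N L n ?xs" using wf_swap_e[OF i w] .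
  have X: "bv x \<in> Vn N L n" "bv ?xs \<in> Vn N L n" using w ws by auto
  have T1: "Tcop N L n i (bv x) = Tc_diag N i x" using Tc_bv_diag[OF w eq] .
  have T2: "Tcop N L n i (bv ?xs) = Tc_diag N i ?xs"
    using Tc_bv_diag[OF ws] eq by (cases x) (simp add: swap_e_def)
  have es: "fst (snd ?xs) ! (i - 1) = fst (snd x) ! i" "fst (snd ?xs) ! i = fst (snd x) ! (i - 1)"
    using i w by (cases x; simp add: swap_e_def wf_lbl_iff swp_nth)+
  have ss: "swap_e i ?xs = x" using swap_e_swap_e[OF i w] .
  consider "fst (snd x) ! (i - 1) = fst (snd x) ! i" | "fst (snd x) ! (i - 1) < fst (snd x) ! i"
    | "fst (snd x) ! i < fst (snd x) ! (i - 1)" by linarith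
  then show ?thesis
  proof cases
    case 1
    then have "Tc_diag N i x = - bv x" by (simp add: Tc_diag_def Let_def)
    then show ?thesis
      unfolding hecke_at_def T1 using Tc_minus[OF X(1)] T1 by (simp add: const_vec_simps algebra_simps)
  next
    case 2
    have H: "Tc_diag N i x = sc (?q ^ 2 - 1) (bv x) - sc ?q (bv ?xs)"
      and H2: "Tc_diag N i ?xs = - sc ?q (bv x)"
      using 2 es ss by (simp_all add: Tc_diag_def Let_def)
    have "Tcop N L n i (Tc_diag N i x) = sc (?q ^ 2 - 1) (Tc_diag N i x) - sc ?q (Tc_diag N i ?xs)"
      unfolding H using X T1 T2 H by (simp add: Tc_diff Tc_sc Vn_sc)
    then show ?thesis
      unfolding hecke_at_def T1 H2 H by (simp add: const_vec_simps algebra_simps power2_eq_square)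
  next
    case 3
    have H: "Tc_diag N i x = - sc ?q (bv ?xs)"
      and H2: "Tc_diag N i ?xs = sc (?q ^ 2 - 1) (bv ?xs) - sc ?q (bv x)"
      using 3 es ss by (simp_all add: Tc_diag_def Let_def)
    have "Tcop N L n i (Tc_diag N i x) = - sc ?q (Tc_diag N i ?xs)"
      unfolding H using X T2 by (simp add: Tc_minus Tc_sc Vn_sc)
    then show ?thesis
      unfolding hecke_at_def T1 H2 H by (simp add: const_vec_simps algebra_simps power2_eq_square)
  qed
qed

lemma hecke_at_bv: "wf_lbl N L n x \<Longrightarrow> hecke_at (bv x)"
  by (rule exp_gap_induct[OF i])
    (auto simp: zmul_bv[symmetric] intro: hecke_at_diag hecke_at_zmul_fst hecke_at_zmul_snd)

lemma hecke: "f \<in> Vn N L n \<Longrightarrow>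
    Tcop N L n i (Tcop N L n i f) = sc (qpar N ^ 2 - 1) (Tcop N L n i f) + sc (qpar N ^ 2) f"
  using hecke_at_bv[unfolded hecke_at_def]
  by (rule linear_on_Vn_eqI[rotated 2])
    (auto simp: linear_on_Vn_def Tc_add Tc_sc Tc_Vn Vn_sc sc_add sc_sc algebra_simps)

definition Tc_inverse :: "vec \<Rightarrow> vec" where
  "Tc_inverse f = sc (inverse (qpar N ^ 2)) (Tcop N L n i f - sc (qpar N ^ 2 - 1) f)"

lemma Tc_inverse_Vn: "f \<in> Vn N L n \<Longrightarrow> Tc_inverse f \<in> Vn N L n"
  unfolding Tc_inverse_def by (intro Vn_sc Vn_diff Tc_Vn) auto

lemma Tc_Tc_inverse: "f \<in> Vn N L n \<Longrightarrow> Tcop N L n i (Tc_inverse f) = f"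
  and Tc_inverse_Tc: "f \<in> Vn N L n \<Longrightarrow> Tc_inverse (Tcop N L n i f) = f"
  unfolding Tc_inverse_def using qpar_nonzero[of N]
  by (simp_all add: Tc_sc Tc_diff Vn_sc Tc_Vn hecke sc_sc sc_diff sc_add)

lemma Tc_inv_eq: "f \<in> Vn N L n \<Longrightarrow> Tc_inv N L n i f = Tc_inverse f"
proof -
  have "inj_on (Tcop N L n i) (Vn N L n)"
    by (rule inj_onI) (metis Tc_inverse_Tc)
  then show "f \<in> Vn N L n \<Longrightarrow> ?thesis"
    unfolding Tc_inv_def using Tc_Tc_inverse Tc_inverse_Vn by (simp add: the_inv_into_f_eq)
qed

end

section \<open>Labels of bounded exponent and fixed degree\<close>

text \<open>For K = und(o_n) and D = sum of und(o_j) minus d, these are the labels of the tensors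
  u_k1 (x) ... (x) u_kn whose wedge products lie in V^d_{M,n} once normally ordered.\<close>
definition capped :: "int \<Rightarrow> int \<Rightarrow> lbl \<Rightarrow> bool" where
  "capped K D x \<longleftrightarrow> (\<forall>a\<in>set (fst x). a \<le> K) \<and> sum_list (fst x) = D"

definition Vcap :: "nat \<Rightarrow> nat \<Rightarrow> nat \<Rightarrow> int \<Rightarrow> int \<Rightarrow> vec set" where
  "Vcap N L n K D = {f \<in> Vn N L n. \<forall>x\<in>supp f. capped K D x}"

lemma Vcap_Vn: "f \<in> Vcap N L n K D \<Longrightarrow> f \<in> Vn N L n"
  by (simp add: Vcap_def)

lemma Vcap_supp: "f \<in> Vcap N L n K D \<Longrightarrow> x \<in> supp f \<Longrightarrow> wf_lbl N L n x \<and> capped K D x"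
  by (auto simp: Vcap_def Vn_iff)

lemma Vcap_zero: "0 \<in> Vcap N L n K D"
  by (simp add: Vcap_def supp_def)

lemma Vcap_bv: "wf_lbl N L n x \<Longrightarrow> capped K D x \<Longrightarrow> bv x \<in> Vcap N L n K D"
  by (simp add: Vcap_def supp_bv Vn_bv)

lemma Vcap_add: "f \<in> Vcap N L n K D \<Longrightarrow> g \<in> Vcap N L n K D \<Longrightarrow> f + g \<in> Vcap N L n K D"
  and Vcap_diff: "f \<in> Vcap N L n K D \<Longrightarrow> g \<in> Vcap N L n K D \<Longrightarrow> f - g \<in> Vcap N L n K D"
  using supp_add[of f g] supp_diff[of f g] by (auto simp: Vcap_def)

lemma Vcap_sc: "f \<in> Vcap N L n K D \<Longrightarrow> sc c f \<in> Vcap N L n K D"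
  using supp_sc[of c f] by (auto simp: Vcap_def)

lemma Vcap_sum: "(\<And>x. x \<in> A \<Longrightarrow> g x \<in> Vcap N L n K D) \<Longrightarrow> (\<Sum>x\<in>A. g x) \<in> Vcap N L n K D"
  by (induction A rule: infinite_finite_induct) (auto intro: Vcap_zero Vcap_add)

lemma lspan_Vcap: "f \<in> lspan A \<Longrightarrow> A \<subseteq> Vcap N L n K D \<Longrightarrow> f \<in> Vcap N L n K D"
  unfolding lspan_def by (auto intro!: Vcap_sum Vcap_sc)

lemma linear_on_Vn_Vcap:
  assumes P: "linear_on_Vn N L n P" and f: "f \<in> Vcap N L n K D"
    and B: "\<And>x. wf_lbl N L n x \<Longrightarrow> capped K D x \<Longrightarrow> P (bv x) \<in> Vcap N L n K D"
  shows "P f \<in> Vcap N L n K D"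
  unfolding linear_on_Vn_expansion[OF P Vcap_Vn[OF f]]
  using Vcap_supp[OF f] B by (intro Vcap_sum Vcap_sc) blast

lemma lin_Vcap: "f \<in> Vcap N L n K D \<Longrightarrow>
    (\<And>x. wf_lbl N L n x \<Longrightarrow> capped K D x \<Longrightarrow> F x \<in> Vcap N L n K D) \<Longrightarrow> lin F f \<in> Vcap N L n K D"
  by (rule linear_on_Vn_Vcap[OF linear_on_Vn_lin]) simp_all

lemma sum_list_eq_pair_update:
  assumes "length ys = length xs" "Suc p < length xs"
    "\<And>j. j < length xs \<Longrightarrow> j \<noteq> p \<Longrightarrow> j \<noteq> Suc p \<Longrightarrow> ys ! j = xs ! j"
    "ys ! p + ys ! Suc p = xs ! p + (xs ! Suc p :: int)"
  shows "sum_list ys = sum_list xs"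
proof -
  have "(\<Sum>j<length xs. ys ! j - xs ! j) = (\<Sum>j\<in>{p, Suc p}. ys ! j - xs ! j)"
    using assms by (intro sum.mono_neutral_right) auto
  also have "\<dots> = 0" using assms(4) by simp
  finally show ?thesis using assms(1) by (simp add: sum_list_sum_nth atLeast0LessThan sum_subtractf)
qed

lemma capped_in_box:
  assumes i: "1 \<le> i" "i < n" and w: "wf_lbl N L n x" and c: "capped K D x" and b: "in_box N L n i x y"
  shows "capped K D y"
proof -
  obtain ex es vs where xe: "x = (ex, es, vs)" by (cases x)
  obtain ey esy vsy where ye: "y = (ey, esy, vsy)" by (cases y)
  have l: "length ex = n" "length ey = n" using w b xe ye by (auto simp: wf_lbl_iff in_box_def)
  have same: "\<And>j. j < n \<Longrightarrow> j \<noteq> i - 1 \<Longrightarrow> j \<noteq> i \<Longrightarrow> ey ! j = ex ! j"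
    and s: "ey ! (i - 1) + ey ! i = ex ! (i - 1) + ex ! i"
    and r: "min (ex ! (i - 1)) (ex ! i) \<le> ey ! (i - 1)" "ey ! (i - 1) \<le> max (ex ! (i - 1)) (ex ! i)"
    using b by (auto simp: in_box_def xe ye)
  have K: "\<And>j. j < n \<Longrightarrow> ex ! j \<le> K" using c l by (auto simp: capped_def xe)
  have Ki: "ex ! (i - 1) \<le> K" "ex ! i \<le> K" using K i by auto
  have "ey ! j \<le> K" if j: "j < n" for j
    using K[OF j] Ki r s same[OF j]
    by (cases "j = i - 1 \<or> j = i") (auto simp: min_def max_def split: if_splits)
  then have "\<forall>a\<in>set ey. a \<le> K" using l by (auto simp: in_set_conv_nth)
  moreover have "sum_list ey = sum_list ex"
    using sum_list_eq_pair_update[of ey ex "i - 1"] l same s i by auto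
  ultimately show ?thesis using c by (simp add: capped_def xe ye)
qed

lemma capped_swap_pos:
  assumes i: "1 \<le> i" "i < n" and w: "wf_lbl N L n x" and c: "capped K D x"
  shows "capped K D (swap_pos i x)"
proof -
  obtain ex es vs where xe: "x = (ex, es, vs)" by (cases x)
  have l: "length ex = n" using w xe by (simp add: wf_lbl_iff)
  have "sum_list (swp i ex) = sum_list ex"
    using sum_list_eq_pair_update[of "swp i ex" ex "i - 1"] l i by (auto simp: swp_nth)
  then show ?thesis using c set_swp[of i ex] l i by (simp add: capped_def xe swap_pos_def)
qed

context
  fixes N L n i :: nat and K D :: int assumes i: "1 \<le> i" "i < n"
begin

lemma Tc_Vcap: "f \<in> Vcap N L n K D \<Longrightarrow> Tcop N L n i f \<in> Vcap N L n K D"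
proof (rule linear_on_Vn_Vcap[OF linear_on_Vn_Tc[OF i]])
  fix x assume w: "wf_lbl N L n x" and c: "capped K D x"
  show "Tcop N L n i (bv x) \<in> Vcap N L n K D"
    using Tc_bv[OF i w] capped_in_box[OF i w c] by (auto simp: Vcap_def)
qed

lemma Tc_inverse_Vcap: "f \<in> Vcap N L n K D \<Longrightarrow> Tc_inverse N L n i f \<in> Vcap N L n K D"
  unfolding Tc_inverse_def[OF i] by (intro Vcap_sc Vcap_diff Tc_Vcap)

lemma sop_Vcap: "f \<in> Vcap N L n K D \<Longrightarrow> sop i f \<in> Vcap N L n K D"
proof (rule linear_on_Vn_Vcap[OF linear_on_Vn_sop])
  fix x assume w: "wf_lbl N L n x" and c: "capped K D x"
  show "sop i (bv x) \<in> Vcap N L n K D"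
    unfolding sop_bv[OF i w] using wf_swap_pos[OF i w] capped_swap_pos[OF i w c] by (rule Vcap_bv)
qed

end

definition Vcap_invertible :: "nat \<Rightarrow> nat \<Rightarrow> nat \<Rightarrow> int \<Rightarrow> int \<Rightarrow> (vec \<Rightarrow> vec) \<Rightarrow> bool" where
  "Vcap_invertible N L n K D P \<longleftrightarrow> (\<exists>Q.
     (\<forall>f\<in>Vn N L n. P f \<in> Vn N L n \<and> Q f \<in> Vn N L n \<and> Q (P f) = f \<and> P (Q f) = f) \<and>
     (\<forall>f\<in>Vcap N L n K D. P f \<in> Vcap N L n K D \<and> Q f \<in> Vcap N L n K D))"

lemma Vcap_invertibleI:
  assumes "\<And>f. f \<in> Vn N L n \<Longrightarrow> P f \<in> Vn N L n" "\<And>f. f \<in> Vn N L n \<Longrightarrow> Q f \<in> Vn N L n"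
    "\<And>f. f \<in> Vn N L n \<Longrightarrow> Q (P f) = f" "\<And>f. f \<in> Vn N L n \<Longrightarrow> P (Q f) = f"
    "\<And>f. f \<in> Vcap N L n K D \<Longrightarrow> P f \<in> Vcap N L n K D" "\<And>f. f \<in> Vcap N L n K D \<Longrightarrow> Q f \<in> Vcap N L n K D"
  shows "Vcap_invertible N L n K D P"
  unfolding Vcap_invertible_def by (intro exI[of _ Q] conjI ballI) (simp_all add: assms)

lemma Vcap_invertible_Vcap: "Vcap_invertible N L n K D P \<Longrightarrow> f \<in> Vcap N L n K D \<Longrightarrow> P f \<in> Vcap N L n K D"
  unfolding Vcap_invertible_def by blast

lemma Vcap_invertible_inv_Vcap:
  assumes "Vcap_invertible N L n K D P" and g: "g \<in> Vcap N L n K D"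
  shows "the_inv_into (Vn N L n) P g \<in> Vcap N L n K D"
proof -
  obtain Q where Q: "\<forall>f\<in>Vn N L n. P f \<in> Vn N L n \<and> Q f \<in> Vn N L n \<and> Q (P f) = f \<and> P (Q f) = f"
    "\<forall>f\<in>Vcap N L n K D. Q f \<in> Vcap N L n K D"
    using assms(1) unfolding Vcap_invertible_def by blast
  have "inj_on P (Vn N L n)" by (rule inj_onI) (metis Q(1))
  then have "the_inv_into (Vn N L n) P g = Q g"
    using Q(1) Vcap_Vn[OF g] by (simp add: the_inv_into_f_eq)
  then show ?thesis using Q(2) g by simp
qed

lemma Vcap_invertible_id: "Vcap_invertible N L n K D id"
  by (rule Vcap_invertibleI[where Q = id]) simp_all

lemma Vcap_invertible_comp:
  assumes "Vcap_invertible N L n K D P" and "Vcap_invertible N L n K D R"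
  shows "Vcap_invertible N L n K D (P \<circ> R)"
proof -
  obtain Q1 where "\<forall>f\<in>Vn N L n. P f \<in> Vn N L n \<and> Q1 f \<in> Vn N L n \<and> Q1 (P f) = f \<and> P (Q1 f) = f"
    "\<forall>f\<in>Vcap N L n K D. P f \<in> Vcap N L n K D \<and> Q1 f \<in> Vcap N L n K D"
    using assms(1) unfolding Vcap_invertible_def by blast
  moreover obtain Q2 where "\<forall>f\<in>Vn N L n. R f \<in> Vn N L n \<and> Q2 f \<in> Vn N L n \<and> Q2 (R f) = f \<and> R (Q2 f) = f"
    "\<forall>f\<in>Vcap N L n K D. R f \<in> Vcap N L n K D \<and> Q2 f \<in> Vcap N L n K D"
    using assms(2) unfolding Vcap_invertible_def by blast
  ultimately show ?thesis
    by (intro Vcap_invertibleI[where Q = "Q2 \<circ> Q1"]) simp_all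
qed

lemma Vcap_invertible_foldr:
  "(\<And>P. P \<in> set ps \<Longrightarrow> Vcap_invertible N L n K D P) \<Longrightarrow> Vcap_invertible N L n K D (foldr (\<circ>) ps id)"
  by (induction ps) (auto intro: Vcap_invertible_comp Vcap_invertible_id)

lemma Vcap_invertible_cong:
  assumes "Vcap_invertible N L n K D P'" and eq: "\<And>f. f \<in> Vn N L n \<Longrightarrow> P f = P' f"
  shows "Vcap_invertible N L n K D P"
proof -
  obtain Q where "\<forall>f\<in>Vn N L n. P' f \<in> Vn N L n \<and> Q f \<in> Vn N L n \<and> Q (P' f) = f \<and> P' (Q f) = f"
    "\<forall>f\<in>Vcap N L n K D. P' f \<in> Vcap N L n K D \<and> Q f \<in> Vcap N L n K D"
    using assms(1) unfolding Vcap_invertible_def by blast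
  then show ?thesis
    using eq Vcap_Vn by (intro Vcap_invertibleI[where Q = Q]) auto
qed

lemma Vcap_invertible_sc: "c \<noteq> 0 \<Longrightarrow> Vcap_invertible N L n K D (sc c)"
  by (rule Vcap_invertibleI[where Q = "sc (inverse c)"]) (auto simp: Vn_sc Vcap_sc sc_sc)

lemma Vcap_invertible_weight:
  assumes w: "\<And>y. w y \<noteq> 0"
  shows "Vcap_invertible N L n K D (\<lambda>f y. w y * f y)"
proof -
  have s: "\<And>f. supp (\<lambda>y. w y * f y) = supp f" "\<And>f. supp (\<lambda>y. inverse (w y) * f y) = supp f"
    using w by (auto simp: supp_def)
  have V: "\<And>f. f \<in> Vn N L n \<Longrightarrow> (\<lambda>y. w y * f y) \<in> Vn N L n"
    "\<And>f. f \<in> Vn N L n \<Longrightarrow> (\<lambda>y. inverse (w y) * f y) \<in> Vn N L n"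
    using s by (auto simp: Vn_iff)
  have C: "\<And>f. f \<in> Vcap N L n K D \<Longrightarrow> (\<lambda>y. w y * f y) \<in> Vcap N L n K D"
    "\<And>f. f \<in> Vcap N L n K D \<Longrightarrow> (\<lambda>y. inverse (w y) * f y) \<in> Vcap N L n K D"
    using s V by (auto simp: Vcap_def)
  show ?thesis
    by (rule Vcap_invertibleI[where Q = "\<lambda>f y. inverse (w y) * f y"]) (auto simp: V C w)
qed

lemma Vcap_invertible_pD1: "Vcap_invertible N L n K D (pD1 N pe)"
proof -
  have "pD1 N pe = (\<lambda>f y. (case y of (ex, es, vs) \<Rightarrow> (qpar N powi pe) powi (ex ! 0)) * f y)"
    by (intro ext) (simp add: pD1_def split: prod.splits)
  moreover have "Vcap_invertible N L n K D
      (\<lambda>f y. (case y of (ex, es, vs) \<Rightarrow> (qpar N powi pe) powi (ex ! 0)) * f y)"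
    by (rule Vcap_invertible_weight) (simp add: qpar_nonzero split: prod.splits)
  ultimately show ?thesis by simp
qed

lemma Vcap_invertible_qnu1: "Vcap_invertible N L n K D (qnu1 N L \<nu>)"
proof -
  have "qnu1 N L \<nu> = (\<lambda>f y. (case y of (ex, es, vs) \<Rightarrow> qpar N powi \<nu> (L + 1 - es ! 0)) * f y)"
    by (intro ext) (simp add: qnu1_def split: prod.splits)
  moreover have "Vcap_invertible N L n K D
      (\<lambda>f y. (case y of (ex, es, vs) \<Rightarrow> qpar N powi \<nu> (L + 1 - es ! 0)) * f y)"
    by (rule Vcap_invertible_weight) (simp add: qpar_nonzero split: prod.splits)
  ultimately show ?thesis by simp
qed

context
  fixes N L n i :: nat and K D :: int assumes i: "1 \<le> i" "i < n"
begin

lemma Vcap_invertible_Tc: "Vcap_invertible N L n K D (Tcop N L n i)"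
  by (rule Vcap_invertibleI[where Q = "Tc_inverse N L n i"])
    (simp_all add: Tc_Vn[OF i] Tc_Vcap[OF i] Tc_inverse_Vn[OF i] Tc_inverse_Vcap[OF i]
      Tc_inverse_Tc[OF i] Tc_Tc_inverse[OF i])

lemma Vcap_invertible_Tc_inverse: "Vcap_invertible N L n K D (Tc_inverse N L n i)"
  by (rule Vcap_invertibleI[where Q = "Tcop N L n i"])
    (simp_all add: Tc_Vn[OF i] Tc_Vcap[OF i] Tc_inverse_Vn[OF i] Tc_inverse_Vcap[OF i]
      Tc_inverse_Tc[OF i] Tc_Tc_inverse[OF i])

lemma Vcap_invertible_Tt_inv: "Vcap_invertible N L n K D (Tt_inv N L n i)"
proof -
  have "Tt_inv N L n i = sc (- inverse (qpar N)) \<circ> Tcop N L n i"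
    by (rule ext) (simp add: Tt_inv_def)
  then show ?thesis
    using Vcap_invertible_comp[OF Vcap_invertible_sc Vcap_invertible_Tc] qpar_nonzero by simp
qed

lemma Vcap_invertible_Tt: "Vcap_invertible N L n K D (Tt N L n i)"
proof (rule Vcap_invertible_cong)
  show "Vcap_invertible N L n K D (sc (- qpar N) \<circ> Tc_inverse N L n i)"
    using Vcap_invertible_comp[OF Vcap_invertible_sc Vcap_invertible_Tc_inverse] qpar_nonzero by simp
  show "Tt N L n i f = (sc (- qpar N) \<circ> Tc_inverse N L n i) f" if "f \<in> Vn N L n" for f
    using that by (simp add: Tt_def Tc_inv_eq[OF i])
qed

lemma Vcap_invertible_sop: "Vcap_invertible N L n K D (sop i)"
  by (rule Vcap_invertibleI[where Q = "sop i"]) (simp_all add: sop_Vn[OF i] sop_Vcap[OF i] sop_sop[OF i])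

end

lemma Vcap_invertible_Yq:
  assumes j: "1 \<le> j" "j \<le> n"
  shows "Vcap_invertible N L n K D (Yq N L n pe \<nu> j)"
proof -
  have "Vcap_invertible N L n K D (Yop N L n pe \<nu> j)"
    unfolding Yop_def using j
    by (intro Vcap_invertible_foldr)
      (auto intro: Vcap_invertible_Tt_inv Vcap_invertible_Tt Vcap_invertible_sop Vcap_invertible_pD1
        Vcap_invertible_qnu1)
  moreover have "Yq N L n pe \<nu> j = sc (qpar N powi (- int (nn N L n))) \<circ> Yop N L n pe \<nu> j"
    by (rule ext) (simp add: Yq_def)
  ultimately show ?thesis
    using Vcap_invertible_comp[OF Vcap_invertible_sc] qpar_nonzero by simp
qed

lemma Yq_Vcap: "1 \<le> j \<Longrightarrow> j \<le> n \<Longrightarrow> g \<in> Vcap N L n K D \<Longrightarrow> Yq N L n pe \<nu> j g \<in> Vcap N L n K D"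
  using Vcap_invertible_Yq Vcap_invertible_Vcap by blast

lemma Yq_inv_Vcap: "1 \<le> j \<Longrightarrow> j \<le> n \<Longrightarrow> g \<in> Vcap N L n K D \<Longrightarrow> Yq_inv N L n pe \<nu> j g \<in> Vcap N L n K D"
  unfolding Yq_inv_def using Vcap_invertible_Yq Vcap_invertible_inv_Vcap by blast

lemma capped_spin_update: "capped K D (ex, es, vs) \<Longrightarrow> capped K D (ex, es, vs')"
  by (simp add: capped_def)

lemma wf_spin_update:
  "wf_lbl N L n (ex, es, vs) \<Longrightarrow> 1 \<le> N \<Longrightarrow> wf_lbl N L n (ex, es, vs[k := rep N r])"
  using set_update_subset_insert[of vs k "rep N r"] by (auto simp: wf_lbl_iff rep_def)

lemma EvOp_Vcap: "1 \<le> N \<Longrightarrow> f \<in> Vcap N L n K D \<Longrightarrow> EvOp N n i j f \<in> Vcap N L n K D"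
  unfolding EvOp_def
proof (rule lin_Vcap)
  fix x assume N: "1 \<le> N" and w: "wf_lbl N L n x" and c: "capped K D x"
  obtain ex es vs where x: "x = (ex, es, vs)" by (cases x)
  have "bv (ex, es, vs[j - 1 := rep N i]) \<in> Vcap N L n K D"
    using wf_spin_update[OF _ N] capped_spin_update w c by (intro Vcap_bv) (auto simp: x)
  then show "(case x of (ex, es, vs) \<Rightarrow> if vs ! (j - 1) mod N = (i + 1) mod N
      then sc (\<Prod>m\<in>{j+1..n}. kcoef N i (vs ! (m - 1))) (bv (ex, es, vs[j - 1 := rep N i])) else 0)
      \<in> Vcap N L n K D"
    by (simp add: x Vcap_sc Vcap_zero)
qed

lemma FvOp_Vcap: "1 \<le> N \<Longrightarrow> f \<in> Vcap N L n K D \<Longrightarrow> FvOp N n i j f \<in> Vcap N L n K D"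
  unfolding FvOp_def
proof (rule lin_Vcap)
  fix x assume N: "1 \<le> N" and w: "wf_lbl N L n x" and c: "capped K D x"
  obtain ex es vs where x: "x = (ex, es, vs)" by (cases x)
  have "bv (ex, es, vs[j - 1 := rep N (i + 1)]) \<in> Vcap N L n K D"
    using wf_spin_update[OF _ N] capped_spin_update w c by (intro Vcap_bv) (auto simp: x)
  then show "(case x of (ex, es, vs) \<Rightarrow> if vs ! (j - 1) mod N = i mod N
      then sc (\<Prod>m\<in>{1..<j}. inverse (kcoef N i (vs ! (m - 1)))) (bv (ex, es, vs[j - 1 := rep N (i + 1)]))
      else 0) \<in> Vcap N L n K D"
    by (simp add: x Vcap_sc Vcap_zero)
qed

lemma KvOp_Vcap: "f \<in> Vcap N L n K D \<Longrightarrow> KvOp N n i f \<in> Vcap N L n K D"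
  unfolding KvOp_def
proof (rule lin_Vcap)
  fix x assume "wf_lbl N L n x" "capped K D x"
  then show "(case x of (ex, es, vs) \<Rightarrow> sc (\<Prod>m\<in>{1..n}. kcoef N i (vs ! (m - 1))) (bv x))
      \<in> Vcap N L n K D"
    by (cases x) (simp add: Vcap_sc Vcap_bv)
qed

lemma piE_Vcap: "1 \<le> N \<Longrightarrow> f \<in> Vcap N L n K D \<Longrightarrow> piE N L n pe \<nu> i f \<in> Vcap N L n K D"
  unfolding piE_def by (intro Vcap_sum) (simp add: EvOp_Vcap Yq_inv_Vcap)

lemma piF_Vcap: "1 \<le> N \<Longrightarrow> f \<in> Vcap N L n K D \<Longrightarrow> piF N L n pe \<nu> i f \<in> Vcap N L n K D"
  unfolding piF_def by (intro Vcap_sum) (simp add: FvOp_Vcap Yq_Vcap)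

lemma piK_Vcap: "f \<in> Vcap N L n K D \<Longrightarrow> piK N n i f \<in> Vcap N L n K D"
  unfolding piK_def by (rule KvOp_Vcap)

section \<open>Straightening modulo the relations\<close>

lemma lspan_zero: "0 \<in> lspan S"
  unfolding lspan_def by (rule CollectI, rule exI[of _ "{}"]) simp

lemma lspan_base: "g \<in> S \<Longrightarrow> g \<in> lspan S"
  unfolding lspan_def by (rule CollectI, rule exI[of _ "{g}"], rule exI[of _ "\<lambda>_. 1"]) simp

lemma lspan_sc: "f \<in> lspan S \<Longrightarrow> sc a f \<in> lspan S"
proof -
  assume "f \<in> lspan S"
  then obtain A c where A: "finite A" "A \<subseteq> S" "f = (\<Sum>g\<in>A. sc (c g) g)"
    by (auto simp: lspan_def)
  have "sc a f = (\<Sum>g\<in>A. sc (a * c g) g)"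
    unfolding A(3) sc_sum by (simp add: sc_sc)
  then show ?thesis
    using A unfolding lspan_def by (intro CollectI exI[of _ A] exI[of _ "\<lambda>g. a * c g"]) simp
qed

lemma lspan_add: "f1 \<in> lspan S \<Longrightarrow> f2 \<in> lspan S \<Longrightarrow> f1 + f2 \<in> lspan S"
proof -
  assume "f1 \<in> lspan S" "f2 \<in> lspan S"
  then obtain A1 c1 A2 c2 where A: "finite A1" "A1 \<subseteq> S" "f1 = (\<Sum>g\<in>A1. sc (c1 g) g)"
    "finite A2" "A2 \<subseteq> S" "f2 = (\<Sum>g\<in>A2. sc (c2 g) g)" by (auto simp: lspan_def)
  define c where "c g = (if g \<in> A1 then c1 g else 0) + (if g \<in> A2 then c2 g else 0)" for g
  have e1: "(\<Sum>g\<in>A1 \<union> A2. sc (if g \<in> A1 then c1 g else 0) g) = f1"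
    unfolding A(3) using A by (intro sum.mono_neutral_cong_right) auto
  have e2: "(\<Sum>g\<in>A1 \<union> A2. sc (if g \<in> A2 then c2 g else 0) g) = f2"
    unfolding A(6) using A by (intro sum.mono_neutral_cong_right) auto
  have "f1 + f2 = (\<Sum>g\<in>A1 \<union> A2. sc (c g) g)"
    unfolding c_def sc_add_left sum.distrib e1 e2 ..
  then show ?thesis
    using A unfolding lspan_def by (intro CollectI exI[of _ "A1 \<union> A2"] exI[of _ c]) simp
qed

definition span_mod :: "vec set \<Rightarrow> vec set \<Rightarrow> vec \<Rightarrow> bool" where
  "span_mod A B f \<longleftrightarrow> (\<exists>g\<in>lspan A. f - g \<in> lspan B)"

lemma span_mod_zero: "span_mod A B 0"
  unfolding span_mod_def by (rule bexI[of _ 0]) (simp_all add: lspan_zero)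

lemma span_mod_base: "f \<in> A \<Longrightarrow> span_mod A B f"
  unfolding span_mod_def by (rule bexI[of _ f]) (simp_all add: lspan_zero lspan_base)

lemma span_mod_add: "span_mod A B f \<Longrightarrow> span_mod A B g \<Longrightarrow> span_mod A B (f + g)"
proof -
  assume "span_mod A B f" "span_mod A B g"
  then obtain f' g' where "f' \<in> lspan A" "f - f' \<in> lspan B" "g' \<in> lspan A" "g - g' \<in> lspan B"
    by (auto simp: span_mod_def)
  moreover have "f + g - (f' + g') = (f - f') + (g - g')" by simp
  ultimately show ?thesis unfolding span_mod_def using lspan_add by metis
qed

lemma span_mod_sc: "span_mod A B f \<Longrightarrow> span_mod A B (sc c f)"
proof -
  assume "span_mod A B f"
  then obtain f' where "f' \<in> lspan A" "f - f' \<in> lspan B" by (auto simp: span_mod_def)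
  moreover have "sc c f - sc c f' = sc c (f - f')" by (simp add: sc_diff)
  ultimately show ?thesis unfolding span_mod_def using lspan_sc by metis
qed

lemma span_mod_diff: "span_mod A B f \<Longrightarrow> span_mod A B g \<Longrightarrow> span_mod A B (f - g)"
  using span_mod_add[of A B f "sc (- 1) g"] span_mod_sc[of A B g "- 1"] by (simp add: sc_minus_one)

lemma span_mod_cong: "span_mod A B f \<Longrightarrow> h - f \<in> lspan B \<Longrightarrow> span_mod A B h"
proof -
  assume "span_mod A B f" "h - f \<in> lspan B"
  then obtain f' where "f' \<in> lspan A" "f - f' \<in> lspan B" "h - f \<in> lspan B" by (auto simp: span_mod_def)
  moreover have "h - f' = (h - f) + (f - f')" by simp
  ultimately show ?thesis unfolding span_mod_def using lspan_add by metis
qed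

lemma span_mod_sum: "(\<And>x. x \<in> S \<Longrightarrow> span_mod A B (g x)) \<Longrightarrow> span_mod A B (\<Sum>x\<in>S. g x)"
  by (induction S rule: infinite_finite_induct) (auto intro: span_mod_zero span_mod_add)

lemma span_mod_supp:
  "finite (supp f) \<Longrightarrow> (\<And>y. y \<in> supp f \<Longrightarrow> span_mod A B (bv y)) \<Longrightarrow> span_mod A B f"
  by (subst basis_expansion) (auto intro!: span_mod_sum span_mod_sc)

lemma span_mod_unscale:
  "c \<noteq> 0 \<Longrightarrow> span_mod A B G \<Longrightarrow> sc c f - G \<in> lspan B \<Longrightarrow> span_mod A B f"
  using span_mod_cong[of A B G "sc c f"] span_mod_sc[of A B "sc c f" "inverse c"] by (simp add: sc_sc)

definition Wgen :: "nat \<Rightarrow> nat \<Rightarrow> nat \<Rightarrow> vec set" where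
  "Wgen N L n = {Tcop N L n i f - Tsop N i f | i f. 1 \<le> i \<and> i < n \<and> f \<in> Vn N L n}"

lemma Wsub_eq: "Wsub N L n = lspan (Wgen N L n)"
  by (simp add: Wsub_def Wgen_def)

lemma Tc_minus_Ts_in_Wsub: "1 \<le> i \<Longrightarrow> i < n \<Longrightarrow> f \<in> Vn N L n \<Longrightarrow>
    Tcop N L n i f - Tsop N i f \<in> lspan (Wgen N L n)"
  unfolding Wgen_def by (rule lspan_base) blast

lemma Tsop_bv: "Tsop N i (bv (ex, es, vs)) =
   (if vs ! (i - 1) = vs ! i then sc (qpar N ^ 2) (bv (ex, es, vs))
    else if vs ! (i - 1) < vs ! i then sc (qpar N) (bv (swap_v i (ex, es, vs)))
    else sc (qpar N) (bv (swap_v i (ex, es, vs))) + sc (qpar N ^ 2 - 1) (bv (ex, es, vs)))"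
  by (simp add: Tsop_def swap_v_def Let_def sc_def plus_fun_def)

text \<open>Modulo W, T^c_i agrees with T^s_i, which is invertible on the span of bv x and
  bv (swap_v i x); hence bv x is congruent to a combination of the images of these two vectors
  under T^c_i.\<close>
lemma span_mod_bv_of_Tc:
  assumes i: "1 \<le> i" "i < n" and w: "wf_lbl N L n x"
    and Tx: "span_mod A (Wgen N L n) (Tcop N L n i (bv x))"
    and Ty: "span_mod A (Wgen N L n) (Tcop N L n i (bv (swap_v i x)))"
  shows "span_mod A (Wgen N L n) (bv x)"
proof -
  obtain ex es vs where xe: "x = (ex, es, vs)" by (cases x)
  define y where "y = swap_v i x"
  define q where "q = qpar N"
  have q: "q \<noteq> 0" by (simp add: q_def qpar_nonzero)
  have len: "length vs = n" using w by (simp add: xe wf_lbl_iff)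
  have ye: "y = (ex, es, swp i vs)" by (simp add: y_def swap_v_def xe)
  have yv: "swp i vs ! (i - 1) = vs ! i" "swp i vs ! i = vs ! (i - 1)" using len i by (simp_all add: swp_nth)
  have yy: "swap_v i y = x" unfolding y_def by (rule swap_v_swap_v[OF i w])
  have W1: "Tcop N L n i (bv x) - Tsop N i (bv x) \<in> lspan (Wgen N L n)"
    and W2: "Tcop N L n i (bv y) - Tsop N i (bv y) \<in> lspan (Wgen N L n)"
    using Tc_minus_Ts_in_Wsub[OF i Vn_bv] w wf_swap_v[OF i w] by (auto simp: y_def)
  consider "vs ! (i - 1) = vs ! i" | "vs ! i < vs ! (i - 1)" | "vs ! (i - 1) < vs ! i" by linarith
  then show ?thesis
  proof cases
    case 1
    have "sc (q ^ 2) (bv x) - Tcop N L n i (bv x) = sc (- 1) (Tcop N L n i (bv x) - Tsop N i (bv x))"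
      using 1 by (simp add: xe Tsop_bv q_def const_vec_simps algebra_simps)
    then have "sc (q ^ 2) (bv x) - Tcop N L n i (bv x) \<in> lspan (Wgen N L n)"
      using W1 by (simp add: lspan_sc)
    then show ?thesis by (rule span_mod_unscale[OF _ Tx, rotated]) (simp add: q)
  next
    case 2
    have "sc q (bv x) - Tcop N L n i (bv y) = sc (- 1) (Tcop N L n i (bv y) - Tsop N i (bv y))"
      using 2 yv yy by (simp add: ye Tsop_bv q_def const_vec_simps algebra_simps)
    then have "sc q (bv x) - Tcop N L n i (bv y) \<in> lspan (Wgen N L n)"
      using W2 by (simp add: lspan_sc)
    then show ?thesis by (rule span_mod_unscale[OF q Ty[folded y_def]])
  next
    case 3
    let ?G = "sc q (Tcop N L n i (bv y)) - sc (q ^ 2 - 1) (Tcop N L n i (bv x))"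
    have Ts: "Tsop N i (bv x) = sc q (bv y)" "Tsop N i (bv y) = sc q (bv x) + sc (q ^ 2 - 1) (bv y)"
      using 3 yv yy by (simp_all add: xe ye Tsop_bv q_def swap_v_def)
    have "sc (q ^ 2) (bv x) - ?G = sc (q ^ 2 - 1) (Tcop N L n i (bv x) - Tsop N i (bv x))
        + sc (- q) (Tcop N L n i (bv y) - Tsop N i (bv y))"
      unfolding Ts by (simp add: const_vec_simps algebra_simps power2_eq_square)
    then have WG: "sc (q ^ 2) (bv x) - ?G \<in> lspan (Wgen N L n)"
      using W1 W2 by (simp add: lspan_add lspan_sc)
    have SG: "span_mod A (Wgen N L n) ?G"
      using Tx Ty by (simp add: y_def span_mod_diff span_mod_sc)
    show ?thesis by (rule span_mod_unscale[OF _ SG WG]) (simp add: q)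
  qed
qed

text \<open>Every straightening step replaces a label by labels that are smaller lexicographically
  in the following four quantities; the caps K and L keep the second and third nonnegative.\<close>
definition exp_sq_sum :: "nat \<Rightarrow> lbl \<Rightarrow> nat" where
  "exp_sq_sum n x = nat (\<Sum>j<n. (fst x ! j) ^ 2)"

definition exp_defect :: "nat \<Rightarrow> int \<Rightarrow> lbl \<Rightarrow> nat" where
  "exp_defect n K x = nat (K * (\<Sum>j<n. int (Suc j)) - (\<Sum>j<n. int (Suc j) * fst x ! j))"

definition colour_defect :: "nat \<Rightarrow> nat \<Rightarrow> lbl \<Rightarrow> nat" where
  "colour_defect n L x = nat (int L * (\<Sum>j<n. int (Suc j)) - (\<Sum>j<n. int (Suc j) * int (fst (snd x) ! j)))"

definition spin_moment :: "nat \<Rightarrow> lbl \<Rightarrow> nat" where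
  "spin_moment n x = nat (\<Sum>j<n. int (Suc j) * int (snd (snd x) ! j))"

definition straighten_order :: "nat \<Rightarrow> int \<Rightarrow> nat \<Rightarrow> (lbl \<times> lbl) set" where
  "straighten_order n K L = measures [exp_sq_sum n, exp_defect n K, colour_defect n L, spin_moment n]"

lemma wf_straighten_order: "wf (straighten_order n K L)"
  by (simp add: straighten_order_def)

lemma sum_pair_update:
  fixes F :: "nat \<Rightarrow> 'a \<Rightarrow> int"
  assumes "Suc p < n" "\<And>j. j < n \<Longrightarrow> j \<noteq> p \<Longrightarrow> j \<noteq> Suc p \<Longrightarrow> ys ! j = xs ! j"
  shows "(\<Sum>j<n. F j (ys ! j)) = (\<Sum>j<n. F j (xs ! j)) + (F p (ys ! p) - F p (xs ! p))
     + (F (Suc p) (ys ! Suc p) - F (Suc p) (xs ! Suc p))"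
proof -
  have "(\<Sum>j<n. F j (ys ! j) - F j (xs ! j)) = (\<Sum>j\<in>{p, Suc p}. F j (ys ! j) - F j (xs ! j))"
    using assms by (intro sum.mono_neutral_right) auto
  then show ?thesis by (simp add: sum_subtractf)
qed

lemma straighten_order_exp:
  assumes p: "Suc p < n" and ly: "length (fst y) = n" and cy: "capped K D y"
    and agree: "\<And>j. j < n \<Longrightarrow> j \<noteq> p \<Longrightarrow> j \<noteq> Suc p \<Longrightarrow> fst y ! j = fst x ! j"
    and sum: "fst y ! p + fst y ! Suc p = fst x ! p + fst x ! Suc p"
    and between: "fst x ! Suc p \<le> fst y ! p" "fst y ! p < fst x ! p"
  shows "(y, x) \<in> straighten_order n K L"
proof -
  define a b a' where "a = fst x ! p" and "b = fst x ! Suc p" and "a' = fst y ! p"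
  have b': "fst y ! Suc p = a + b - a'" using sum by (simp add: a_def b_def a'_def)
  have sq: "(\<Sum>j<n. (fst y ! j) ^ 2) = (\<Sum>j<n. (fst x ! j) ^ 2) + 2 * (a' - a) * (a' - b)"
    using sum_pair_update[OF p, of "fst y" "fst x" "\<lambda>j v. v ^ 2"] agree b'
    by (simp add: a_def b_def a'_def power2_eq_square algebra_simps)
  have nonneg: "0 \<le> (\<Sum>j<n. (fst y ! j) ^ 2)" by (intro sum_nonneg) simp
  show ?thesis
  proof (cases "a' = b")
    case False
    then have "2 * (a' - a) * (a' - b) < 0"
      using between by (simp add: a_def b_def a'_def mult_neg_pos)
    then have "exp_sq_sum n y < exp_sq_sum n x" unfolding exp_sq_sum_def using sq nonneg by simp
    then show ?thesis by (simp add: straighten_order_def)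
  next
    case True
    then have "exp_sq_sum n y = exp_sq_sum n x" unfolding exp_sq_sum_def using sq by simp
    moreover have "(\<Sum>j<n. int (Suc j) * fst y ! j) = (\<Sum>j<n. int (Suc j) * fst x ! j) + (a - b)"
      using sum_pair_update[OF p, of "fst y" "fst x" "\<lambda>j v. int (Suc j) * v"] agree b' True
      by (simp add: a_def b_def a'_def algebra_simps)
    moreover have "(\<Sum>j<n. int (Suc j) * fst y ! j) \<le> K * (\<Sum>j<n. int (Suc j))"
    proof -
      have "\<And>j. j < n \<Longrightarrow> fst y ! j \<le> K" using ly cy by (auto simp: capped_def)
      then have "(\<Sum>j<n. int (Suc j) * fst y ! j) \<le> (\<Sum>j<n. int (Suc j) * K)"
        by (intro sum_mono mult_left_mono) auto
      then show ?thesis by (simp add: sum_distrib_left mult.commute)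
    qed
    moreover have "a - b > 0" using between True by (simp add: a_def b_def a'_def)
    ultimately have "exp_defect n K y < exp_defect n K x" unfolding exp_defect_def by linarith
    with \<open>exp_sq_sum n y = exp_sq_sum n x\<close> show ?thesis by (simp add: straighten_order_def)
  qed
qed

lemma straighten_order_colour:
  assumes p: "Suc p < n" and w: "wf_lbl N L n y" and ex: "fst y = fst x"
    and agree: "\<And>j. j < n \<Longrightarrow> j \<noteq> p \<Longrightarrow> j \<noteq> Suc p \<Longrightarrow> fst (snd y) ! j = fst (snd x) ! j"
    and swap: "fst (snd y) ! p = fst (snd x) ! Suc p" "fst (snd y) ! Suc p = fst (snd x) ! p"
    and lt: "fst (snd x) ! Suc p < fst (snd x) ! p"
  shows "(y, x) \<in> straighten_order n K L"
proof -
  have "(\<Sum>j<n. int (Suc j) * int (fst (snd y) ! j)) = (\<Sum>j<n. int (Suc j) * int (fst (snd x) ! j))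
      + (int (fst (snd x) ! p) - int (fst (snd x) ! Suc p))"
    using sum_pair_update[OF p, of "fst (snd y)" "fst (snd x)" "\<lambda>j v. int (Suc j) * int v"] agree swap
    by (simp add: algebra_simps)
  moreover have "(\<Sum>j<n. int (Suc j) * int (fst (snd y) ! j)) \<le> int L * (\<Sum>j<n. int (Suc j))"
  proof -
    have "\<And>j. j < n \<Longrightarrow> fst (snd y) ! j \<le> L" using w by (cases y) (auto simp: wf_lbl_iff)
    then have "(\<Sum>j<n. int (Suc j) * int (fst (snd y) ! j)) \<le> (\<Sum>j<n. int (Suc j) * int L)"
      by (intro sum_mono mult_left_mono) auto
    then show ?thesis by (simp add: sum_distrib_left mult.commute)
  qed
  ultimately have "colour_defect n L y < colour_defect n L x"
    unfolding colour_defect_def using lt by linarith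
  then show ?thesis using ex by (simp add: straighten_order_def exp_sq_sum_def exp_defect_def)
qed

lemma straighten_order_spin:
  assumes p: "Suc p < n" and ex: "fst y = fst x" "fst (snd y) = fst (snd x)"
    and agree: "\<And>j. j < n \<Longrightarrow> j \<noteq> p \<Longrightarrow> j \<noteq> Suc p \<Longrightarrow> snd (snd y) ! j = snd (snd x) ! j"
    and swap: "snd (snd y) ! p = snd (snd x) ! Suc p" "snd (snd y) ! Suc p = snd (snd x) ! p"
    and lt: "snd (snd x) ! p < snd (snd x) ! Suc p"
  shows "(y, x) \<in> straighten_order n K L"
proof -
  have "(\<Sum>j<n. int (Suc j) * int (snd (snd y) ! j)) = (\<Sum>j<n. int (Suc j) * int (snd (snd x) ! j))
      + (int (snd (snd x) ! p) - int (snd (snd x) ! Suc p))"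
    using sum_pair_update[OF p, of "snd (snd y)" "snd (snd x)" "\<lambda>j v. int (Suc j) * int v"] agree swap
    by (simp add: algebra_simps)
  moreover have "0 \<le> (\<Sum>j<n. int (Suc j) * int (snd (snd y) ! j))" by (intro sum_nonneg) simp
  ultimately have "spin_moment n y < spin_moment n x"
    unfolding spin_moment_def using lt by linarith
  then show ?thesis
    using ex by (simp add: straighten_order_def exp_sq_sum_def exp_defect_def colour_defect_def)
qed

text \<open>Factors i and i+1 are out of normal order, i.e. their indices satisfy k_i \<le> k_{i+1}.\<close>
definition inversion :: "lbl \<Rightarrow> nat \<Rightarrow> bool" where
  "inversion x i \<longleftrightarrow> fst x ! i < fst x ! (i - 1) \<or> (fst x ! (i - 1) = fst x ! i \<and>
     (fst (snd x) ! i < fst (snd x) ! (i - 1) \<or> (fst (snd x) ! (i - 1) = fst (snd x) ! i \<and>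
       snd (snd x) ! (i - 1) \<le> snd (snd x) ! i)))"

context
  fixes N L n i :: nat and K D :: int and A :: "vec set" and x :: lbl
  assumes i: "1 \<le> i" "i < n" and w: "wf_lbl N L n x" and c: "capped K D x"
    and IH: "\<And>z. (z, x) \<in> straighten_order n K L \<Longrightarrow> wf_lbl N L n z \<Longrightarrow> capped K D z \<Longrightarrow>
      span_mod A (Wgen N L n) (bv z)"
begin

lemma swap_v_same_exps: "fst (swap_v i x) = fst x" "fst (snd (swap_v i x)) = fst (snd x)"
  and capped_swap_v: "capped K D (swap_v i x)"
  using c by (cases x; simp add: swap_v_def capped_def)+

lemma span_mod_bv_exp_inversion:
  assumes inv: "fst x ! i < fst x ! (i - 1)"
  shows "span_mod A (Wgen N L n) (bv x)"
proof -
  have si: "Suc (i - 1) = i" using i by simp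
  have T: "span_mod A (Wgen N L n) (Tcop N L n i (bv z))"
    if wz: "wf_lbl N L n z" and cz: "capped K D z" and fz: "fst z = fst x" for z
  proof (rule span_mod_supp)
    show "finite (supp (Tcop N L n i (bv z)))" using Tc_bv(1)[OF i wz] by (simp add: Vn_iff)
    fix u assume "u \<in> supp (Tcop N L n i (bv z))"
    then have b: "in_box N L n i z u" by (rule Tc_bv(3)[OF i wz])
    then have wu: "wf_lbl N L n u" by (simp add: in_box_def)
    have lu: "length (fst u) = n" using wu by (cases u) (simp add: wf_lbl_iff)
    have "(u, x) \<in> straighten_order n K L"
      using straighten_order_exp[of "i - 1" n u K D x L] si i lu capped_in_box[OF i wz cz b] b fz inv
      by (simp add: in_box_def)
    then show "span_mod A (Wgen N L n) (bv u)" using IH wu capped_in_box[OF i wz cz b] by blast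
  qed
  show ?thesis
    using span_mod_bv_of_Tc[OF i w T[OF w c] T[OF wf_swap_v[OF i w] capped_swap_v]] swap_v_same_exps
    by simp
qed

lemma span_mod_bv_colour_inversion:
  assumes eq: "fst x ! (i - 1) = fst x ! i" and inv: "fst (snd x) ! i < fst (snd x) ! (i - 1)"
  shows "span_mod A (Wgen N L n) (bv x)"
proof -
  have si: "Suc (i - 1) = i" using i by simp
  have T: "span_mod A (Wgen N L n) (Tcop N L n i (bv z))"
    if wz: "wf_lbl N L n z" and cz: "capped K D z" and fz: "fst z = fst x"
      and ez: "fst (snd z) = fst (snd x)" for z
  proof -
    have lz: "length (fst (snd z)) = n" using wz by (cases z) (simp add: wf_lbl_iff)
    have "Tcop N L n i (bv z) = - sc (qpar N) (bv (swap_e i z))"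
      using Tc_bv_diag[OF i wz] eq fz ez inv by (simp add: Tc_diag_def Let_def)
    moreover have "(swap_e i z, x) \<in> straighten_order n K L"
      using straighten_order_colour[of "i - 1" n N L "swap_e i z" x] si i wf_swap_e[OF i wz] fz ez inv lz
      by (cases z) (simp add: swap_e_def swp_nth)
    moreover have "capped K D (swap_e i z)" using cz by (cases z) (simp add: swap_e_def capped_def)
    ultimately have "span_mod A (Wgen N L n) (sc (- qpar N) (bv (swap_e i z)))"
      using IH wf_swap_e[OF i wz] span_mod_sc by blast
    then show ?thesis using \<open>Tcop N L n i (bv z) = - sc (qpar N) (bv (swap_e i z))\<close>
      by (simp add: sc_uminus_left)
  qed
  show ?thesis
    using span_mod_bv_of_Tc[OF i w T[OF w c] T[OF wf_swap_v[OF i w] capped_swap_v]] swap_v_same_exps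
    by simp
qed

lemma span_mod_bv_spin_tie:
  assumes eq: "fst x ! (i - 1) = fst x ! i" "fst (snd x) ! (i - 1) = fst (snd x) ! i"
    and le: "snd (snd x) ! (i - 1) \<le> snd (snd x) ! i"
  shows "span_mod A (Wgen N L n) (bv x)"
proof -
  obtain ex es vs where xe: "x = (ex, es, vs)" by (cases x)
  define q where "q = qpar N"
  have Tx: "Tcop N L n i (bv x) = - bv x"
    using Tc_bv_diag[OF i w] eq by (simp add: Tc_diag_def Let_def)
  have W: "Tcop N L n i (bv x) - Tsop N i (bv x) \<in> lspan (Wgen N L n)"
    using Tc_minus_Ts_in_Wsub[OF i Vn_bv[OF w]] .
  show ?thesis
  proof (cases "vs ! (i - 1) = vs ! i")
    case True
    have "sc (1 + q ^ 2) (bv x) - 0 = sc (- 1) (Tcop N L n i (bv x) - Tsop N i (bv x))"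
      using True Tx by (simp add: xe Tsop_bv q_def const_vec_simps algebra_simps)
    then have W0: "sc (1 + q ^ 2) (bv x) - 0 \<in> lspan (Wgen N L n)" using W by (simp add: lspan_sc)
    show ?thesis
      by (rule span_mod_unscale[OF _ span_mod_zero W0]) (simp add: q_def one_plus_qpar_sq_nonzero)
  next
    case False
    then have lt: "vs ! (i - 1) < vs ! i" using le by (simp add: xe)
    define y where "y = swap_v i x"
    have len: "length vs = n" using w by (simp add: xe wf_lbl_iff)
    have "(y, x) \<in> straighten_order n K L"
      using straighten_order_spin[of "i - 1" n y x K L] i lt len
      by (simp add: y_def xe swap_v_def swp_nth)
    then have "span_mod A (Wgen N L n) (sc (- q) (bv y))"
      using IH wf_swap_v[OF i w] capped_swap_v span_mod_sc by (simp add: y_def)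
    then have "span_mod A (Wgen N L n) (- sc q (bv y))" by (simp add: sc_uminus_left)
    moreover have "sc 1 (bv x) - - sc q (bv y) = sc (- 1) (Tcop N L n i (bv x) - Tsop N i (bv x))"
      using lt Tx by (simp add: xe y_def Tsop_bv q_def const_vec_simps algebra_simps)
    then have "sc 1 (bv x) - - sc q (bv y) \<in> lspan (Wgen N L n)" using W by (simp add: lspan_sc)
    ultimately show ?thesis by (rule span_mod_unscale[rotated]) simp
  qed
qed

end

lemma span_mod_straighten:
  assumes normal: "\<And>x. wf_lbl N L n x \<Longrightarrow> capped K D x \<Longrightarrow> \<forall>i. 1 \<le> i \<and> i < n \<longrightarrow> \<not> inversion x i
      \<Longrightarrow> span_mod A (Wgen N L n) (bv x)"
  shows "wf_lbl N L n x \<Longrightarrow> capped K D x \<Longrightarrow> span_mod A (Wgen N L n) (bv x)"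
proof (induction x rule: wf_induct_rule[OF wf_straighten_order[of n K L], case_names less])
  case (less x)
  show ?case
  proof (cases "\<exists>i. 1 \<le> i \<and> i < n \<and> inversion x i")
    case False
    then show ?thesis using normal less.prems by blast
  next
    case True
    then obtain i where i: "1 \<le> i" "i < n" and inv: "inversion x i" by blast
    note cases = span_mod_bv_exp_inversion[OF i less.prems less.IH]
      span_mod_bv_colour_inversion[OF i less.prems less.IH] span_mod_bv_spin_tie[OF i less.prems less.IH]
    show ?thesis using inv cases unfolding inversion_def by blast
  qed
qed

section \<open>Normally ordered labels and V^d_{M,n}\<close>

text \<open>The index k of the vector u_k with label (a, e, v).\<close>
definition kval :: "nat \<Rightarrow> nat \<Rightarrow> int \<Rightarrow> nat \<Rightarrow> nat \<Rightarrow> int" where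
  "kval N L a e v = int v - int N * (int e + int L * a)"

lemma sum_shift_index: "(\<Sum>i=1..n. f (i - 1)) = (\<Sum>j<n. f j :: int)" for n :: nat
  by (induction n) (simp_all add: add.commute)

lemma multiple_small_abs_zero: "\<bar>x\<bar> < int N \<Longrightarrow> x = int N * m \<Longrightarrow> x = (0::int)"
proof (rule ccontr)
  assume a: "\<bar>x\<bar> < int N" "x = int N * m" "x \<noteq> 0"
  then have "1 \<le> \<bar>m\<bar>" by auto
  then have "int N \<le> int N * \<bar>m\<bar>" by (simp add: mult_le_cancel_left1)
  also have "\<dots> = \<bar>x\<bar>" using a by (simp add: abs_mult)
  finally show False using a by simp
qed

context
  fixes N L :: nat assumes N: "1 \<le> N" and L: "1 \<le> L"
begin

lemma kval_decomp:
  "k = kval N L (kund N L k) (kdot N L k) (kbar N k) \<and>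
    1 \<le> kbar N k \<and> kbar N k \<le> N \<and> 1 \<le> kdot N L k \<and> kdot N L k \<le> L"
proof -
  define r where "r = (k - 1) mod int N"
  have r: "0 \<le> r" "r < int N" using N by (simp_all add: r_def)
  have kb: "int (kbar N k) = r + 1" using r by (simp add: kbar_def r_def)
  define t where "t = (int (kbar N k) - k) div int N"
  have "k - 1 = int N * ((k - 1) div int N) + r" unfolding r_def by simp
  then have "int (kbar N k) - k = int N * (- ((k - 1) div int N))" using kb by (simp add: algebra_simps)
  then have kt: "int (kbar N k) - k = int N * t" unfolding t_def using N by simp
  define s where "s = (t - 1) mod int L"
  have s: "0 \<le> s" "s < int L" using L by (simp_all add: s_def)
  have kd: "int (kdot N L k) = s + 1" using s by (simp add: kdot_def s_def t_def)
  have "t - 1 = int L * ((t - 1) div int L) + s" unfolding s_def by simp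
  then have ts: "t - int (kdot N L k) = int L * ((t - 1) div int L)" using kd by (simp add: algebra_simps)
  have "kund N L k = (t - 1) div int L"
    unfolding kund_def t_def[symmetric] ts using L by simp
  then show ?thesis
    using kt ts kb kd r s by (simp add: kval_def algebra_simps)
qed

lemma kval_components:
  assumes "1 \<le> v" "v \<le> N" "1 \<le> e" "e \<le> L"
  shows "kbar N (kval N L a e v) = v \<and> kdot N L (kval N L a e v) = e \<and> kund N L (kval N L a e v) = a"
proof -
  define k where "k = kval N L a e v"
  have d: "int v - int N * (int e + int L * a) = int (kbar N k) - int N * (int (kdot N L k) + int L * kund N L k)"
    and b: "1 \<le> kbar N k" "kbar N k \<le> N" "1 \<le> kdot N L k" "kdot N L k \<le> L"
    using kval_decomp[of k] by (auto simp: k_def kval_def)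
  have "int v - int (kbar N k) = int N * ((int e + int L * a) - (int (kdot N L k) + int L * kund N L k))"
    using d by (simp add: algebra_simps)
  moreover have "\<bar>int v - int (kbar N k)\<bar> < int N" using assms b by linarith
  ultimately have v: "int v = int (kbar N k)" using multiple_small_abs_zero by fastforce
  then have "int N * ((int e + int L * a) - (int (kdot N L k) + int L * kund N L k)) = 0"
    using d by (simp add: algebra_simps)
  then have "(int e + int L * a) - (int (kdot N L k) + int L * kund N L k) = 0"
    using N by simp
  then have "int e - int (kdot N L k) = int L * (kund N L k - a)"
    by (simp add: algebra_simps)
  moreover have "\<bar>int e - int (kdot N L k)\<bar> < int L" using assms b by linarith
  ultimately have e: "int e = int (kdot N L k)" using multiple_small_abs_zero by fastforce
  then have "int L * (kund N L k - a) = 0" using d v N by (simp add: algebra_simps)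
  then show ?thesis using v e L by (simp add: k_def)
qed

lemma kund_antimono:
  assumes le: "k2 \<le> k1"
  shows "kund N L k1 \<le> kund N L k2"
proof (rule ccontr)
  define X1 X2 where "X1 = int (kdot N L k1) + int L * kund N L k1"
    and "X2 = int (kdot N L k2) + int L * kund N L k2"
  have k: "k1 = int (kbar N k1) - int N * X1" "k2 = int (kbar N k2) - int N * X2"
    and b: "kbar N k1 \<le> N" "1 \<le> kdot N L k1" "1 \<le> kbar N k2" "kdot N L k2 \<le> L"
    using kval_decomp[of k1] kval_decomp[of k2] by (auto simp: kval_def X1_def X2_def)
  assume "\<not> kund N L k1 \<le> kund N L k2"
  then have "int L * (kund N L k2 + 1) \<le> int L * kund N L k1" using L by simp
  then have "X2 + 1 \<le> X1" using b by (simp add: X1_def X2_def algebra_simps)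
  then have "int N * (X2 + 1) \<le> int N * X1" by (rule mult_left_mono) simp
  then have "k1 < k2" using k b by (simp add: algebra_simps)
  then show False using le by simp
qed

lemma kval_less:
  assumes "1 \<le> e" "e \<le> L" "1 \<le> e'" "e' \<le> L" "1 \<le> v" "v \<le> N" "1 \<le> v'" "v' \<le> N"
    and "a \<le> a'" "a = a' \<Longrightarrow> e \<le> e'" "a = a' \<Longrightarrow> e = e' \<Longrightarrow> v' < v"
  shows "kval N L a' e' v' < kval N L a e v"
proof -
  have diff: "kval N L a e v - kval N L a' e' v' = (int v - int v') + int N * (int e' - int e)
      + int N * int L * (a' - a)"
    by (simp add: kval_def algebra_simps)
  have v: "1 - int N \<le> int v - int v'" using assms by linarith
  consider "a < a'" | "a = a'" "e < e'" | "a = a'" "e = e'" using assms(9,10) by fastforce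
  then show ?thesis
  proof cases
    case 1
    then have "int N * int L \<le> int N * int L * (a' - a)" using N L by simp
    moreover have "int N * (1 - int L) \<le> int N * (int e' - int e)"
      using assms by (intro mult_left_mono) auto
    ultimately show ?thesis using diff v by (simp add: algebra_simps)
  next
    case 2
    then have "int N * 1 \<le> int N * (int e' - int e)" by (intro mult_left_mono) auto
    then show ?thesis using diff v 2 by simp
  next
    case 3
    then show ?thesis using diff assms by simp
  qed
qed

definition cap_exp :: "int \<Rightarrow> nat \<Rightarrow> int" where
  "cap_exp M n = kund N L (M - int n + 1)"

definition cap_deg :: "int \<Rightarrow> nat \<Rightarrow> int \<Rightarrow> int" where
  "cap_deg M n d = (\<Sum>i=1..n. kund N L (M - int i + 1)) - d"

lemma Bd_capped:
  assumes "x \<in> Bd N L M n d"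
  shows "wf_lbl N L n x \<and> capped (cap_exp M n) (cap_deg M n d) x"
proof -
  obtain ks where x: "x = ulab N L ks" and l: "length ks = n" and so: "sorted_wrt (>) ks"
    and last: "n > 0 \<longrightarrow> kund N L (last ks) \<le> kund N L (M - int n + 1)"
    and deg: "(\<Sum>i=1..n. kund N L (M - int i + 1) - kund N L (ks ! (i - 1))) = d"
    using assms unfolding Bd_def by blast
  have w: "wf_lbl N L n x" using l kval_decomp by (auto simp: x ulab_def wf_lbl_iff)
  have "kund N L (ks ! j) \<le> cap_exp M n" if j: "j < n" for j
  proof -
    have "ks ! (n - 1) \<le> ks ! j"
    proof (cases "j = n - 1")
      case False
      then have "j < n - 1" using j by simp
      then show ?thesis using sorted_wrt_nth_less[OF so, of j "n - 1"] l by simp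
    qed simp
    moreover have "ks \<noteq> []" using l j by auto
    then have "last ks = ks ! (n - 1)" using l by (simp add: last_conv_nth)
    ultimately have "kund N L (ks ! j) \<le> kund N L (last ks)"
      by (simp add: kund_antimono)
    then show ?thesis using last j by (simp add: cap_exp_def)
  qed
  then have "\<forall>a\<in>set (map (kund N L) ks). a \<le> cap_exp M n" using l by (auto simp: in_set_conv_nth)
  moreover have "sum_list (map (kund N L) ks) = cap_deg M n d"
    using deg sum_shift_index[of "\<lambda>j. kund N L (ks ! j)" n] l
    by (simp add: cap_deg_def sum_subtractf sum_list_sum_nth atLeast0LessThan)
  ultimately show ?thesis using w by (simp add: x ulab_def capped_def)
qed

lemma normal_in_Bd:
  assumes w: "wf_lbl N L n x" and c: "capped (cap_exp M n) (cap_deg M n d) x"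
    and normal: "\<forall>i. 1 \<le> i \<and> i < n \<longrightarrow> \<not> inversion x i"
  shows "x \<in> Bd N L M n d"
proof -
  obtain ex es vs where xe: "x = (ex, es, vs)" by (cases x)
  have len: "length ex = n" "length es = n" "length vs = n" using w xe by (auto simp: wf_lbl_iff)
  have bounds: "\<And>j. j < n \<Longrightarrow> 1 \<le> es ! j \<and> es ! j \<le> L \<and> 1 \<le> vs ! j \<and> vs ! j \<le> N"
    using w len by (auto simp: xe wf_lbl_iff)
  define ks where "ks = map (\<lambda>j. kval N L (ex ! j) (es ! j) (vs ! j)) [0..<n]"
  have lk: "length ks = n" by (simp add: ks_def)
  have comp: "\<And>j. j < n \<Longrightarrow> kbar N (ks ! j) = vs ! j \<and> kdot N L (ks ! j) = es ! j \<and> kund N L (ks ! j) = ex ! j"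
    using kval_components bounds by (simp add: ks_def)
  have "ulab N L ks = x"
    unfolding ulab_def xe using len comp lk by (auto intro!: nth_equalityI)
  moreover have "sorted_wrt (>) ks"
  proof -
    have "ks ! Suc j < ks ! j" if j: "Suc j < n" for j
      using normal[rule_format, of "Suc j"] bounds[of j] bounds[of "Suc j"] j
      by (auto simp: ks_def inversion_def xe intro!: kval_less)
    then show ?thesis using sorted_wrt_iff_nth_Suc_transp[of "(>)" ks] lk by (auto simp: transp_def)
  qed
  moreover have "n > 0 \<longrightarrow> kund N L (last ks) \<le> kund N L (M - int n + 1)"
    using c comp lk len by (auto simp: last_conv_nth capped_def cap_exp_def xe)
  moreover have "(\<Sum>i=1..n. kund N L (M - int i + 1) - kund N L (ks ! (i - 1))) = d"
    using c comp len sum_shift_index[of "\<lambda>j. kund N L (ks ! j)" n]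
    by (simp add: sum_subtractf capped_def cap_deg_def xe sum_list_sum_nth atLeast0LessThan)
  ultimately show ?thesis unfolding Bd_def using lk by blast
qed

lemma VMd_subset_Vcap: "VMd N L M n d \<subseteq> Vcap N L n (cap_exp M n) (cap_deg M n d)"
  unfolding VMd_def by (rule subsetI, erule lspan_Vcap) (auto dest: Bd_capped intro: Vcap_bv)

lemma Vcap_span_mod_VMd:
  assumes f: "f \<in> Vcap N L n (cap_exp M n) (cap_deg M n d)"
  shows "span_mod (bv ` Bd N L M n d) (Wgen N L n) f"
proof (rule span_mod_supp)
  show "finite (supp f)" using Vcap_Vn[OF f] by (simp add: Vn_iff)
  have normal: "span_mod (bv ` Bd N L M n d) (Wgen N L n) (bv x)"
    if "wf_lbl N L n x" "capped (cap_exp M n) (cap_deg M n d) x"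
      "\<forall>i. 1 \<le> i \<and> i < n \<longrightarrow> \<not> inversion x i" for x
    using normal_in_Bd[OF that] by (intro span_mod_base) blast
  fix y assume "y \<in> supp f"
  then show "span_mod (bv ` Bd N L M n d) (Wgen N L n) (bv y)"
    using Vcap_supp[OF f] span_mod_straighten[OF normal] by blast
qed

lemma stable_mod_VMd:
  assumes "\<And>f. f \<in> Vcap N L n (cap_exp M n) (cap_deg M n d) \<Longrightarrow>
      \<phi> f \<in> Vcap N L n (cap_exp M n) (cap_deg M n d)"
  shows "stable_mod (VMd N L M n d) (Wsub N L n) \<phi>"
  unfolding stable_mod_def
proof
  fix f assume "f \<in> VMd N L M n d"
  then have "span_mod (bv ` Bd N L M n d) (Wgen N L n) (\<phi> f)"
    using VMd_subset_Vcap assms Vcap_span_mod_VMd by blast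
  then show "\<exists>g\<in>VMd N L M n d. \<phi> f - g \<in> Wsub N L n"
    unfolding span_mod_def VMd_def Wsub_eq .
qed

end

theorem mainTheorem14:
  fixes N L s l n :: nat and M d pe :: int and \<nu> :: "nat \<Rightarrow> int"
  assumes "N \<ge> 2" and "L \<ge> 1"
    and "s < N * L" and "M mod int (N * L) = int s"
    and "n = s + l * N * L" and "d \<ge> 0"
  shows "\<forall>i<N.
     stable_mod (VMd N L M n d) (Wsub N L n) (piE N L n pe \<nu> i) \<and>
     stable_mod (VMd N L M n d) (Wsub N L n) (piF N L n pe \<nu> i) \<and>
     stable_mod (VMd N L M n d) (Wsub N L n) (piK N n i)"
proof (intro allI impI conjI)
  fix i
  have N: "1 \<le> N" and L: "1 \<le> L" using assms(1,2) by simp_all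
  show "stable_mod (VMd N L M n d) (Wsub N L n) (piE N L n pe \<nu> i)"
    by (rule stable_mod_VMd[OF N L piE_Vcap[OF N]])
  show "stable_mod (VMd N L M n d) (Wsub N L n) (piF N L n pe \<nu> i)"
    by (rule stable_mod_VMd[OF N L piF_Vcap[OF N]])
  show "stable_mod (VMd N L M n d) (Wsub N L n) (piK N n i)"
    by (rule stable_mod_VMd[OF N L piK_Vcap])
qed

end
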